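(* Let $n\geq1$, $\beta>0$, and let $f(\xi)\in\mathbb{Z}_p[\xi_1,\ldots,\xi_n]$ be an elliptic polynomial of degree $d$. Then there is a positive constant $A$ such that for every $x\in\mathbb{Q}_p^n$ and every $t>0$, \[ |Z(x,t)|\leq A\,t\,\big(\|x\|_p+t^{\frac{1}{\beta d}}\big)^{-d\beta-n}. \]
   Context: $\mathbb{Q}_p$ is the field of $p$-adic numbers, $\mathbb{Z}_p$ its ring of integers, $|\cdot|_p$ the $p$-adic absolute value, $\|x\|_p=\max_i|x_i|_p$. $d\xi$ is the Haar measure on $\mathbb{Q}_p^n$ with $\mathbb{Z}_p^n$ of measure $1$. $\Psi$ is the standard additive character of $\mathbb{Q}_p$, $\Psi(a)=\exp(2\pi i\{a\}_p)$ where $\{a\}_p$ is the fractional part of $a$, and $x\cdot\xi=\sum_i x_i\xi_i$. A polynomial $f\in\mathbb{Q}_p[\xi_1,\dots,\xi_n]$ is elliptic of degree $d$ if it is a non-constant homogeneous polynomial of degree $d$ and $f(\xi)=0\iff\xi=0$. $Z(x,t)=\int_{\mathbb{Q}_p^n}\Psi(x\cdot\xi)e^{-t|f(\xi)|_p^{\beta}}\,d\xi$ for $x\in\mathbb{Q}_p^n$, $t>0$. *)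

theory Defs
  imports "HOL-Analysis.Analysis" "HOL-Computational_Algebra.Primes"
begin

(* A p-adic number is represented canonically by its digit function
   x = sum_i (x i) p^i  with digits x i < p and support bounded below. *)
type_synonym padic = "int \<Rightarrow> nat"
(* A vector in Q_p^n: coordinates j < n, padded with zero for j >= n. *)
type_synonym padicvec = "nat \<Rightarrow> padic"

definition padic_carrier :: "nat \<Rightarrow> padic set" where
  "padic_carrier p = {x. (\<forall>i. x i < p) \<and> (\<exists>N. \<forall>i<N. x i = 0)}"

definition padic_zero :: padic where
  "padic_zero = (\<lambda>_. 0)"

definition padic_one :: padic where
  "padic_one = (\<lambda>i. if i = 0 then 1 else 0)"

definition padic_trunc :: "nat \<Rightarrow> padic \<Rightarrow> int \<Rightarrow> rat" where
  "padic_trunc p x k = (\<Sum>i\<in>{i. i < k \<and> x i \<noteq> 0}. of_nat (x i) * of_nat p powi i)"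

definition rat_digit :: "nat \<Rightarrow> rat \<Rightarrow> int \<Rightarrow> nat" where
  "rat_digit p q i = nat (\<lfloor>q / (of_nat p powi i)\<rfloor> mod int p)"

(* p-adic limit of non-negative rational approximants, digit by digit *)
definition padic_of_approx :: "nat \<Rightarrow> (nat \<Rightarrow> rat) \<Rightarrow> padic" where
  "padic_of_approx p q = (\<lambda>i. THE c. \<forall>\<^sub>F m in sequentially. rat_digit p (q m) i = c)"

definition padic_add :: "nat \<Rightarrow> padic \<Rightarrow> padic \<Rightarrow> padic" where
  "padic_add p x y = padic_of_approx p (\<lambda>m. padic_trunc p x (int m) + padic_trunc p y (int m))"

definition padic_mult :: "nat \<Rightarrow> padic \<Rightarrow> padic \<Rightarrow> padic" where
  "padic_mult p x y = padic_of_approx p (\<lambda>m. padic_trunc p x (int m) * padic_trunc p y (int m))"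

definition padic_pow :: "nat \<Rightarrow> padic \<Rightarrow> nat \<Rightarrow> padic" where
  "padic_pow p x k = (padic_mult p x ^^ k) padic_one"

definition padic_abs :: "nat \<Rightarrow> padic \<Rightarrow> real" where
  "padic_abs p x = (if x = padic_zero then 0 else real p powi (- (LEAST i. x i \<noteq> 0)))"

definition padic_frac :: "nat \<Rightarrow> padic \<Rightarrow> rat" where
  "padic_frac p x = padic_trunc p x 0"

definition padic_char :: "nat \<Rightarrow> padic \<Rightarrow> complex" where
  "padic_char p a = cis (2 * pi * real_of_rat (padic_frac p a))"

definition qpn :: "nat \<Rightarrow> nat \<Rightarrow> padicvec set" where
  "qpn p n = {x. (\<forall>j<n. x j \<in> padic_carrier p) \<and> (\<forall>j\<ge>n. x j = padic_zero)}"

definition zpn :: "nat \<Rightarrow> nat \<Rightarrow> padicvec set" where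
  "zpn p n = {x \<in> qpn p n. \<forall>j<n. \<forall>i<0. x j i = 0}"

definition padic_vzero :: padicvec where
  "padic_vzero = (\<lambda>_. padic_zero)"

definition padic_norm :: "nat \<Rightarrow> nat \<Rightarrow> padicvec \<Rightarrow> real" where
  "padic_norm p n x = Max ((\<lambda>j. padic_abs p (x j)) ` {..<n})"

definition vadd :: "nat \<Rightarrow> nat \<Rightarrow> padicvec \<Rightarrow> padicvec \<Rightarrow> padicvec" where
  "vadd p n x y = (\<lambda>j. if j < n then padic_add p (x j) (y j) else padic_zero)"

definition padic_dot :: "nat \<Rightarrow> nat \<Rightarrow> padicvec \<Rightarrow> padicvec \<Rightarrow> padic" where
  "padic_dot p n x \<xi> = foldr (\<lambda>j acc. padic_add p (padic_mult p (x j) (\<xi> j)) acc) [0..<n] padic_zero"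

definition padic_ball :: "nat \<Rightarrow> nat \<Rightarrow> padicvec \<Rightarrow> int \<Rightarrow> padicvec set" where
  "padic_ball p n a k = {vadd p n a z | z. z \<in> qpn p n \<and> padic_norm p n z \<le> real p powi k}"

definition padic_haar :: "nat \<Rightarrow> nat \<Rightarrow> padicvec measure \<Rightarrow> bool" where
  "padic_haar p n M \<longleftrightarrow>
     space M = qpn p n \<and>
     sets M = sigma_sets (qpn p n) {padic_ball p n a k | a k. a \<in> qpn p n} \<and>
     (\<forall>a\<in>qpn p n. \<forall>A\<in>sets M. vadd p n a ` A \<in> sets M \<and>
         emeasure M (vadd p n a ` A) = emeasure M A) \<and>
     emeasure M (zpn p n) = 1"

(* A polynomial in n variables: a finite list of terms (coefficient, exponent vector) *)
type_synonym padic_poly = "(padic \<times> (nat \<Rightarrow> nat)) list"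

definition monomial_eval :: "nat \<Rightarrow> nat \<Rightarrow> (nat \<Rightarrow> nat) \<Rightarrow> padicvec \<Rightarrow> padic" where
  "monomial_eval p n \<alpha> \<xi> = foldr (\<lambda>j acc. padic_mult p (padic_pow p (\<xi> j) (\<alpha> j)) acc) [0..<n] padic_one"

definition poly_eval :: "nat \<Rightarrow> nat \<Rightarrow> padic_poly \<Rightarrow> padicvec \<Rightarrow> padic" where
  "poly_eval p n f \<xi> = foldr (\<lambda>(c, \<alpha>) acc. padic_add p (padic_mult p c (monomial_eval p n \<alpha> \<xi>)) acc) f padic_zero"

definition padic_homogeneous :: "nat \<Rightarrow> nat \<Rightarrow> nat \<Rightarrow> padic_poly \<Rightarrow> bool" where
  "padic_homogeneous p n d f \<longleftrightarrow>
     (\<forall>(c, \<alpha>)\<in>set f. c \<in> padic_carrier p \<and> (\<forall>j\<ge>n. \<alpha> j = 0) \<and> (\<Sum>j<n. \<alpha> j) = d)"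

definition padic_int_coeffs :: "padic_poly \<Rightarrow> bool" where
  "padic_int_coeffs f \<longleftrightarrow> (\<forall>(c, \<alpha>)\<in>set f. \<forall>i<0. c i = 0)"

definition padic_elliptic :: "nat \<Rightarrow> nat \<Rightarrow> nat \<Rightarrow> padic_poly \<Rightarrow> bool" where
  "padic_elliptic p n d f \<longleftrightarrow>
     d \<ge> 1 \<and> padic_homogeneous p n d f \<and>
     (\<forall>\<xi>\<in>qpn p n. poly_eval p n f \<xi> = padic_zero \<longleftrightarrow> \<xi> = padic_vzero)"

definition heat_kernel :: "nat \<Rightarrow> nat \<Rightarrow> padic_poly \<Rightarrow> real \<Rightarrow> padicvec measure \<Rightarrow> padicvec \<Rightarrow> real \<Rightarrow> complex" where
  "heat_kernel p n f \<beta> M x t =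
     (LINT \<xi>|M. padic_char p (padic_dot p n x \<xi>) *
                 complex_of_real (exp (- t * padic_abs p (poly_eval p n f \<xi>) powr \<beta>)))"

end

theory Submission
  imports Defs
begin

text \<open>Two estimates are combined. Ellipticity and homogeneity of \<open>f\<close>, together with the
  compactness of the unit sphere of \<open>\<int>\<^sub>p\<^sup>n\<close>, give \<open>p^(-L) \<parallel>\<xi>\<parallel>^d \<le> |f(\<xi>)| \<le> \<parallel>\<xi>\<parallel>^d\<close>.
  Summing \<open>exp (- t |f|^\<beta>)\<close> over the shells \<open>\<parallel>\<xi>\<parallel> = p^k\<close>, of Haar measure \<open>p^(n k)\<close>, gives
  \<open>|Z(x,t)| \<le> C t^(-n/(\<beta> d))\<close>. For \<open>x \<noteq> 0\<close>, translating \<open>\<xi>\<close> by a vector \<open>\<eta>\<close> with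
  \<open>\<parallel>\<eta>\<parallel> = p \<parallel>x\<parallel>^(-1)\<close> multiplies \<open>Z(x,t)\<close> by the root of unity \<open>\<Psi>(x \<cdot> \<eta>) \<noteq> 1\<close>, up to
  replacing \<open>exp (- t |f(\<xi>)|^\<beta>)\<close> by \<open>exp (- t |f(\<xi> + \<eta>)|^\<beta>)\<close>. By the ultrametric inequality
  these agree outside the ball \<open>\<parallel>\<xi>\<parallel> \<le> p^(L+1) \<parallel>x\<parallel>^(-1)\<close>, of measure \<open>p^(n(L+1)) \<parallel>x\<parallel>^(-n)\<close>,
  and on it they differ by at most \<open>t p^(\<beta> d (L+1)) \<parallel>x\<parallel>^(-\<beta> d)\<close>; this gives
  \<open>|Z(x,t)| \<le> C t \<parallel>x\<parallel>^(-\<beta> d - n)\<close>. The first bound is used for \<open>\<parallel>x\<parallel> \<le> t^(1/(\<beta> d))\<close>, the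
  second otherwise.

  Sums and products of digit functions are digitwise limits of the rational sums and products of
  their truncations; all algebraic laws used here follow by comparing truncations modulo powers
  of \<open>p\<close>.\<close>

section \<open>Rational approximations of digit functions\<close>

definition ppow_mult :: "nat \<Rightarrow> int \<Rightarrow> rat \<Rightarrow> bool" where
  "ppow_mult p m q \<longleftrightarrow> (\<exists>z::int. q = of_int z * of_nat p powi m)"

definition zero_below :: "int \<Rightarrow> padic \<Rightarrow> bool" where
  "zero_below m x \<longleftrightarrow> (\<forall>i<m. x i = 0)"

lemma ppow_mult_0[simp]: "ppow_mult p m 0"
  unfolding ppow_mult_def by (rule exI[of _ 0]) simp

lemma ppow_mult_add: "ppow_mult p m a \<Longrightarrow> ppow_mult p m b \<Longrightarrow> ppow_mult p m (a + b)"
  unfolding ppow_mult_def by (metis distrib_right of_int_add)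

lemma ppow_mult_minus: "ppow_mult p m a \<Longrightarrow> ppow_mult p m (- a)"
  unfolding ppow_mult_def by (metis minus_mult_left of_int_minus)

lemma ppow_mult_diff: "ppow_mult p m a \<Longrightarrow> ppow_mult p m b \<Longrightarrow> ppow_mult p m (a - b)"
  using ppow_mult_add[of p m a "-b"] ppow_mult_minus[of p m b] by simp

lemma ppow_mult_sum: "(\<And>i. i \<in> A \<Longrightarrow> ppow_mult p m (f i)) \<Longrightarrow> ppow_mult p m (sum f A)"
  by (induction A rule: infinite_finite_induct) (auto intro: ppow_mult_add)

lemma ppow_mult_mult: "ppow_mult p a x \<Longrightarrow> ppow_mult p b y \<Longrightarrow> p > 0 \<Longrightarrow> ppow_mult p (a + b) (x * y)"
proof -
  assume "ppow_mult p a x" "ppow_mult p b y" "p > 0"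
  then obtain z w where "x = of_int z * of_nat p powi a" "y = of_int w * of_nat p powi b"
    unfolding ppow_mult_def by auto
  thus ?thesis unfolding ppow_mult_def using \<open>p > 0\<close>
    by (intro exI[of _ "z * w"]) (simp add: power_int_add algebra_simps)
qed

lemma ppow_mult_mono: assumes "ppow_mult p m a" "m' \<le> m" "p > 0" shows "ppow_mult p m' a"
proof -
  from assms obtain z where z: "a = of_int z * of_nat p powi m" unfolding ppow_mult_def by auto
  have "(of_nat p :: rat) powi m = of_nat p powi m' * of_nat p powi (m - m')"
    using assms(3) by (simp add: power_int_add[symmetric])
  also have "(of_nat p :: rat) powi (m - m') = of_int (int p ^ nat (m - m'))"
    using assms(2) by (simp add: power_int_nonneg_exp)
  finally show ?thesis unfolding ppow_mult_def using z
    by (intro exI[of _ "z * int p ^ nat (m - m')"]) (simp add: algebra_simps)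
qed

lemma ppow_mult_powi: "ppow_mult p m (of_nat p powi m)"
  unfolding ppow_mult_def by (rule exI[of _ 1]) simp

lemma ppow_mult_of_nat: "ppow_mult p 0 (of_nat z)"
  unfolding ppow_mult_def by (rule exI[of _ "int z"]) simp

lemma ppow_mult_scale: "ppow_mult p m a \<Longrightarrow> p > 0 \<Longrightarrow> ppow_mult p (m + k) (of_nat p powi k * a)"
  using ppow_mult_mult[of p k "of_nat p powi k" m a] ppow_mult_powi[of p k] by (simp add: add.commute)

lemma rat_digit_cong:
  assumes "ppow_mult p m (q1 - q2)" "i < m" "p > 0"
  shows "rat_digit p q1 i = rat_digit p q2 i"
proof -
  from assms obtain z where z: "q1 = q2 + of_int z * of_nat p powi m" unfolding ppow_mult_def
    by (metis add.commute diff_add_cancel)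
  have pm: "(of_nat p :: rat) powi m = of_nat p powi i * of_nat p powi (m - i)"
    using assms(3) by (simp add: power_int_add[symmetric])
  have pe: "(of_nat p :: rat) powi (m - i) = of_int (int p ^ nat (m - i))"
    using assms(2) by (simp add: power_int_nonneg_exp)
  have "q1 / of_nat p powi i = q2 / of_nat p powi i + of_int (z * int p ^ nat (m - i))"
    using assms(3) by (simp add: z pm pe field_simps)
  hence fl: "\<lfloor>q1 / of_nat p powi i\<rfloor> = \<lfloor>q2 / of_nat p powi i\<rfloor> + z * int p ^ nat (m - i)"
    by (simp only: floor_add_int)
  have "int p dvd z * int p ^ nat (m - i)" using assms(2)
    by (simp add: dvd_power)
  hence "\<lfloor>q1 / of_nat p powi i\<rfloor> mod int p = \<lfloor>q2 / of_nat p powi i\<rfloor> mod int p"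
    unfolding fl by (metis mod_add_right_eq add_0_right dvd_imp_mod_0 mod_add_left_eq)
  thus ?thesis unfolding rat_digit_def by simp
qed

lemma rat_digit_less: "p > 0 \<Longrightarrow> rat_digit p q i < p"
  unfolding rat_digit_def by (simp add: nat_less_iff)

lemma rat_digit_low:
  assumes "ppow_mult p N q" "i < N" "p > 0"
  shows "rat_digit p q i = 0"
proof -
  have "rat_digit p q i = rat_digit p 0 i"
    by (rule rat_digit_cong[OF _ assms(2,3)]) (use assms(1) in simp)
  thus ?thesis by (simp add: rat_digit_def)
qed

lemma rat_digit_0[simp]: "rat_digit p 0 i = 0"
  by (simp add: rat_digit_def)

lemma floor_div_nat_rat: "p > 0 \<Longrightarrow> \<lfloor>(x::rat) / of_nat p\<rfloor> = \<lfloor>x\<rfloor> div int p"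
proof -
  assume p: "p > 0"
  let ?f = "\<lfloor>x\<rfloor>"
  have "of_int (?f div int p) \<le> x / of_nat p"
  proof -
    have "?f div int p * int p = ?f - ?f mod int p" by (simp add: minus_mod_eq_div_mult)
    moreover have "?f mod int p \<ge> 0" using p by simp
    ultimately have "?f div int p * int p \<le> ?f" by linarith
    hence "of_int (?f div int p) * of_nat p \<le> (of_int ?f :: rat)"
      by (metis of_int_le_iff of_int_mult of_int_of_nat_eq)
    also have "\<dots> \<le> x" by simp
    finally show ?thesis using p by (simp add: field_simps)
  qed
  moreover have "x / of_nat p < of_int (?f div int p) + 1"
  proof -
    have "x < of_int (?f + 1)" by linarith
    also have "?f + 1 \<le> (?f div int p + 1) * int p"
    proof -
      have "?f div int p * int p = ?f - ?f mod int p" by (simp add: minus_mod_eq_div_mult)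
      moreover have "?f mod int p < int p" using p by simp
      ultimately show ?thesis by (simp add: distrib_right)
    qed
    hence "(of_int (?f + 1) :: rat) \<le> of_int ((?f div int p + 1) * int p)" by (simp only: of_int_le_iff)
    finally show ?thesis using p by (simp add: field_simps)
  qed
  ultimately show ?thesis by (intro floor_unique) auto
qed

lemma rat_digit_expansion:
  assumes "ppow_mult p N q" "N \<le> m" "p > 0"
  shows "q - (\<Sum>i\<in>{N..<m}. of_nat (rat_digit p q i) * of_nat p powi i)
           = of_int \<lfloor>q / of_nat p powi m\<rfloor> * of_nat p powi m"
  using assms(2)
proof (induction m rule: int_ge_induct)
  case base
  from assms(1) obtain z where z: "q = of_int z * of_nat p powi N" unfolding ppow_mult_def by auto
  show ?case using assms(3) by (simp add: z)
next
  case (step m)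
  let ?F = "\<lambda>m. \<lfloor>q / (of_nat p powi m :: rat)\<rfloor>"
  have "{N..<m+1} = insert m {N..<m}" using step.hyps by auto
  hence "(\<Sum>i\<in>{N..<m+1}. of_nat (rat_digit p q i) * (of_nat p powi i :: rat))
       = of_nat (rat_digit p q m) * of_nat p powi m + (\<Sum>i\<in>{N..<m}. of_nat (rat_digit p q i) * of_nat p powi i)"
    by simp
  moreover have "of_nat (rat_digit p q m) = (of_int (?F m mod int p) :: rat)"
    unfolding rat_digit_def using assms(3) by simp
  moreover have "?F (m+1) = ?F m div int p"
  proof -
    have "(of_nat p::rat) powi (m+1) = of_nat p powi m * of_nat p"
      using assms(3) by (simp add: power_int_add_1)
    hence "q / of_nat p powi (m+1) = (q / of_nat p powi m) / of_nat p"
      by (simp add: divide_divide_eq_left)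
    thus ?thesis using floor_div_nat_rat[OF assms(3), of "q / of_nat p powi m"] by (simp only:)
  qed
  moreover have "(of_int (?F m) :: rat) = of_int (?F m div int p) * of_nat p + of_int (?F m mod int p)"
    by (metis of_int_add of_int_mult of_int_of_nat_eq div_mult_mod_eq)
  moreover have "(of_nat p::rat) powi (m+1) = of_nat p powi m * of_nat p"
      using assms(3) by (simp add: power_int_add_1)
  ultimately show ?case using step.IH
    by (simp add: algebra_simps)
qed

lemma rat_digit_expansion_ppow_mult:
  assumes "ppow_mult p N q" "N \<le> m" "p > 0"
  shows "ppow_mult p m (q - (\<Sum>i\<in>{N..<m}. of_nat (rat_digit p q i) * of_nat p powi i))"
  unfolding rat_digit_expansion[OF assms] ppow_mult_def by auto

lemma padic_carrier_zero_below: "x \<in> padic_carrier p \<Longrightarrow> \<exists>N. zero_below N x"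
  unfolding padic_carrier_def zero_below_def by auto

lemma zero_below_mono: "zero_below N x \<Longrightarrow> N' \<le> N \<Longrightarrow> zero_below N' x"
  unfolding zero_below_def by auto

lemma padic_carrier_zero_below_le: "x \<in> padic_carrier p \<Longrightarrow> \<exists>N\<le>K. zero_below N x"
  using padic_carrier_zero_below zero_below_mono by (metis min.cobounded1 min.cobounded2)

lemma padic_carrier_digit_less: "x \<in> padic_carrier p \<Longrightarrow> x i < p"
  unfolding padic_carrier_def by auto

lemma padic_trunc_eq_sum:
  assumes "zero_below N x"
  shows "padic_trunc p x k = (\<Sum>i\<in>{N..<k}. of_nat (x i) * of_nat p powi i)"
  unfolding padic_trunc_def
proof (rule sum.mono_neutral_left)
  show "{i. i < k \<and> x i \<noteq> 0} \<subseteq> {N..<k}" using assms unfolding zero_below_def by (auto simp: not_less[symmetric])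
qed auto

lemma padic_trunc_cong: "(\<And>i. i < k \<Longrightarrow> x i = y i) \<Longrightarrow> padic_trunc p x k = padic_trunc p y k"
  unfolding padic_trunc_def by (rule sum.cong) auto

lemma padic_trunc_below: "zero_below k x \<Longrightarrow> padic_trunc p x k = 0"
  unfolding padic_trunc_def zero_below_def by auto

lemma padic_trunc_zero[simp]: "padic_trunc p padic_zero k = 0"
  unfolding padic_trunc_def padic_zero_def by simp

lemma padic_trunc_succ:
  assumes "zero_below N x"
  shows "padic_trunc p x (k + 1) = padic_trunc p x k + of_nat (x k) * of_nat p powi k"
proof -
  have z: "zero_below (min N k) x" using zero_below_mono[OF assms] by simp
  have "{min N k..<k+1} = insert k {min N k..<k}" by auto
  thus ?thesis unfolding padic_trunc_eq_sum[OF z] by simp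
qed

lemma padic_trunc_ppow_mult:
  assumes "zero_below N x" "p > 0" shows "ppow_mult p N (padic_trunc p x k)"
  unfolding padic_trunc_eq_sum[OF assms(1)]
proof (rule ppow_mult_sum)
  fix i assume "i \<in> {N..<k}"
  have "ppow_mult p (0 + i) (of_nat (x i) * of_nat p powi i)"
    by (rule ppow_mult_mult[OF ppow_mult_of_nat ppow_mult_powi assms(2)])
  thus "ppow_mult p N (of_nat (x i) * of_nat p powi i)"
    using ppow_mult_mono[OF _ _ assms(2)] \<open>i \<in> {N..<k}\<close> by simp
qed

lemma padic_trunc_diff_ppow_mult:
  assumes "zero_below N x" "k \<le> k'" "p > 0"
  shows "ppow_mult p k (padic_trunc p x k' - padic_trunc p x k)"
  using assms(2)
proof (induction k' rule: int_ge_induct)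
  case (step m)
  have "ppow_mult p (0 + m) (of_nat (x m) * of_nat p powi m)"
    by (rule ppow_mult_mult[OF ppow_mult_of_nat ppow_mult_powi assms(3)])
  hence "ppow_mult p k (of_nat (x m) * of_nat p powi m)"
    using ppow_mult_mono[OF _ _ assms(3)] step.hyps by simp
  then show ?case using step.IH padic_trunc_succ[OF assms(1), of p m]
    by (metis (no_types, lifting) add_diff_eq diff_add_eq ppow_mult_add)
qed simp

lemma padic_trunc_bound:
  assumes "zero_below N x" "N \<le> k" "\<And>i. x i < p" "p > 0"
  shows "padic_trunc p x k + of_nat p powi N \<le> of_nat p powi k"
  using assms(2)
proof (induction k rule: int_ge_induct)
  case base
  show ?case using padic_trunc_below[OF assms(1)] by simp
next
  case (step m)
  have "of_nat (x m) \<le> (of_nat p - 1 :: rat)" using assms(3)[of m] by (simp add: of_nat_diff[symmetric] less_Suc_eq_le[symmetric])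
  hence "of_nat (x m) * of_nat p powi m \<le> (of_nat p - 1) * (of_nat p powi m :: rat)"
    using assms(4) by (intro mult_right_mono) auto
  thus ?case using step.IH padic_trunc_succ[OF assms(1), of p m] assms(4)
    by (simp add: power_int_add algebra_simps)
qed

lemma padic_trunc_nonneg: "0 \<le> padic_trunc p x k"
  unfolding padic_trunc_def by (intro sum_nonneg) auto

lemma padic_trunc_less:
  assumes "x \<in> padic_carrier p" "p > 0"
  shows "padic_trunc p x k < of_nat p powi k"
proof -
  obtain N where N: "N \<le> k" "zero_below N x" using padic_carrier_zero_below_le[OF assms(1)] by auto
  have "padic_trunc p x k + of_nat p powi N \<le> of_nat p powi k"
    by (rule padic_trunc_bound[OF N(2) N(1)]) (use padic_carrier_digit_less[OF assms(1)] assms(2) in auto)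
  moreover have "(0::rat) < of_nat p powi N" using assms(2) by simp
  ultimately show ?thesis by linarith
qed

lemma padic_trunc_digit:
  assumes "x \<in> padic_carrier p" "i < k" "p > 0"
  shows "rat_digit p (padic_trunc p x k) i = x i"
proof -
  obtain N where N: "zero_below N x" using padic_carrier_zero_below[OF assms(1)] by auto
  have "rat_digit p (padic_trunc p x k) i = rat_digit p (padic_trunc p x (i+1)) i"
    by (rule rat_digit_cong[OF padic_trunc_diff_ppow_mult[OF N]]) (use assms in auto)
  also have "padic_trunc p x (i+1) = padic_trunc p x i + of_nat (x i) * of_nat p powi i"
    by (rule padic_trunc_succ[OF N])
  also have "rat_digit p \<dots> i = x i"
  proof -
    have lt: "padic_trunc p x i / of_nat p powi i < 1" "0 \<le> padic_trunc p x i / of_nat p powi i"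
      using padic_trunc_less[OF assms(1,3)] padic_trunc_nonneg[of p x i] assms(3) by (auto simp: field_simps)
    have "(padic_trunc p x i + of_nat (x i) * of_nat p powi i) / of_nat p powi i
          = padic_trunc p x i / of_nat p powi i + of_int (int (x i))"
      using assms(3) by (simp add: field_simps)
    hence "\<lfloor>(padic_trunc p x i + of_nat (x i) * of_nat p powi i) / of_nat p powi i\<rfloor> = int (x i)"
      using lt by (simp add: floor_unique)
    thus ?thesis unfolding rat_digit_def using padic_carrier_digit_less[OF assms(1), of i] by simp
  qed
  finally show ?thesis .
qed

lemma padic_eqI:
  assumes "x \<in> padic_carrier p" "y \<in> padic_carrier p" "p > 0"
    and "\<And>k. ppow_mult p k (padic_trunc p x k - padic_trunc p y k)"
  shows "x = y"
proof
  fix i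
  have "x i = rat_digit p (padic_trunc p x (i+1)) i" using padic_trunc_digit[OF assms(1) _ assms(3)] by simp
  also have "\<dots> = rat_digit p (padic_trunc p y (i+1)) i"
    by (rule rat_digit_cong[OF assms(4)]) (use assms(3) in auto)
  also have "\<dots> = y i" using padic_trunc_digit[OF assms(2) _ assms(3)] by simp
  finally show "x i = y i" .
qed

locale padic_cauchy_seq =
  fixes p :: nat and q :: "nat \<Rightarrow> rat" and N :: int and C :: int
  assumes p_pos: "p > 0"
    and low: "\<And>m. ppow_mult p N (q m)"
    and cauchy: "\<And>m m'. m \<le> m' \<Longrightarrow> ppow_mult p (int m - C) (q m' - q m)"
begin

lemma padic_of_approx_digit:
  assumes "int m - C > i"
  shows "padic_of_approx p q i = rat_digit p (q m) i"
proof -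
  let ?c = "rat_digit p (q m) i"
  have ev: "\<forall>\<^sub>F m' in sequentially. rat_digit p (q m') i = ?c"
    unfolding eventually_sequentially
  proof (intro exI allI impI)
    fix m' assume "m \<le> m'"
    show "rat_digit p (q m') i = ?c"
      by (rule rat_digit_cong[OF cauchy[OF \<open>m \<le> m'\<close>]]) (use assms p_pos in auto)
  qed
  show ?thesis unfolding padic_of_approx_def
  proof (rule the_equality)
    fix c assume "\<forall>\<^sub>F m in sequentially. rat_digit p (q m) i = c"
    with ev have "\<forall>\<^sub>F m in sequentially. c = ?c" by eventually_elim auto
    thus "c = ?c" by simp
  qed (rule ev)
qed

lemma padic_of_approx_digit_ex: "\<exists>m. padic_of_approx p q i = rat_digit p (q m) i"
  using padic_of_approx_digit[of i "nat (i + C + 1)"] by auto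

lemma padic_of_approx_carrier: "padic_of_approx p q \<in> padic_carrier p"
  unfolding padic_carrier_def
proof (intro CollectI conjI allI impI exI[of _ N])
  fix i show "padic_of_approx p q i < p" using padic_of_approx_digit_ex[of i] rat_digit_less[OF p_pos] by metis
next
  fix i assume "i < N"
  thus "padic_of_approx p q i = 0" using padic_of_approx_digit_ex[of i] rat_digit_low[OF low _ p_pos] by metis
qed

lemma padic_of_approx_zero_below: "zero_below N (padic_of_approx p q)"
  unfolding zero_below_def using padic_of_approx_digit_ex rat_digit_low[OF low _ p_pos] by metis

lemma padic_of_approx_trunc:
  assumes "int M - C \<ge> k"
  shows "ppow_mult p k (padic_trunc p (padic_of_approx p q) k - q M)"
proof (cases "k \<le> N")
  case True
  hence "padic_trunc p (padic_of_approx p q) k = 0"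
    using padic_trunc_below[OF zero_below_mono[OF padic_of_approx_zero_below True]] by simp
  thus ?thesis using ppow_mult_mono[OF low True p_pos] ppow_mult_minus by simp
next
  case False
  hence "padic_trunc p (padic_of_approx p q) k
        = (\<Sum>i\<in>{N..<k}. of_nat (rat_digit p (q M) i) * of_nat p powi i)"
    unfolding padic_trunc_eq_sum[OF padic_of_approx_zero_below] using assms by (intro sum.cong refl) (auto simp: padic_of_approx_digit)
  thus ?thesis using ppow_mult_minus[OF rat_digit_expansion_ppow_mult[OF low, of k M]] False p_pos by simp
qed

end

section \<open>Arithmetic of digit functions\<close>

lemma padic_zero_carrier[simp]: "p > 0 \<Longrightarrow> padic_zero \<in> padic_carrier p"
  unfolding padic_carrier_def padic_zero_def by auto

lemma padic_one_carrier: "p > 1 \<Longrightarrow> padic_one \<in> padic_carrier p"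
  unfolding padic_carrier_def padic_one_def by (auto intro: exI[of _ 0])

lemma zero_below_zero[simp]: "zero_below N padic_zero"
  unfolding zero_below_def padic_zero_def by auto

lemma zero_below_one: "zero_below 0 padic_one"
  unfolding zero_below_def padic_one_def by auto

lemma padic_trunc_one: "padic_trunc p padic_one k = (if k > 0 then 1 else 0)"
proof -
  have "{i. i < k \<and> padic_one i \<noteq> 0} = (if k > 0 then {0} else {})"
    unfolding padic_one_def by auto
  thus ?thesis unfolding padic_trunc_def by (simp add: padic_one_def)
qed

lemma padic_carrier_trunc_diff_ppow_mult:
  assumes "x \<in> padic_carrier p" "k \<le> k'" "p > 0"
  shows "ppow_mult p k (padic_trunc p x k' - padic_trunc p x k)"
  using padic_carrier_zero_below[OF assms(1)] padic_trunc_diff_ppow_mult assms by blast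

lemma padic_cauchy_seq_add:
  assumes "a \<in> padic_carrier p" "b \<in> padic_carrier p" "p > 0"
    and "zero_below Na a" "zero_below Nb b"
  shows "padic_cauchy_seq p (\<lambda>m. padic_trunc p a (int m) + padic_trunc p b (int m)) (min Na Nb) 0"
proof
  fix m show "ppow_mult p (min Na Nb) (padic_trunc p a (int m) + padic_trunc p b (int m))"
    using padic_trunc_ppow_mult[OF zero_below_mono[OF assms(4)] assms(3)] padic_trunc_ppow_mult[OF zero_below_mono[OF assms(5)] assms(3)]
    by (intro ppow_mult_add) auto
next
  fix m m' :: nat assume "m \<le> m'"
  thus "ppow_mult p (int m - 0) (padic_trunc p a (int m') + padic_trunc p b (int m') -
          (padic_trunc p a (int m) + padic_trunc p b (int m)))"
    using padic_carrier_trunc_diff_ppow_mult[OF assms(1) _ assms(3), of "int m" "int m'"]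
      padic_carrier_trunc_diff_ppow_mult[OF assms(2) _ assms(3), of "int m" "int m'"]
    by (simp add: diff_add_eq add_diff_eq ppow_mult_add diff_diff_eq2 algebra_simps)
      (metis (no_types, lifting) add_diff_eq diff_diff_eq2 ppow_mult_add diff_add_eq)
qed (use assms in auto)

lemma padic_add_carrier:
  assumes "a \<in> padic_carrier p" "b \<in> padic_carrier p" "p > 0"
  shows "padic_add p a b \<in> padic_carrier p"
proof -
  obtain Na Nb where "zero_below Na a" "zero_below Nb b" using padic_carrier_zero_below assms by metis
  from padic_cauchy_seq.padic_of_approx_carrier[OF padic_cauchy_seq_add[OF assms this]] show ?thesis unfolding padic_add_def .
qed

lemma padic_add_zero_below:
  assumes "a \<in> padic_carrier p" "b \<in> padic_carrier p" "p > 0" "zero_below N a" "zero_below N b"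
  shows "zero_below N (padic_add p a b)"
  using padic_cauchy_seq.padic_of_approx_zero_below[OF padic_cauchy_seq_add[OF assms]] unfolding padic_add_def by simp

lemma padic_add_trunc:
  assumes "a \<in> padic_carrier p" "b \<in> padic_carrier p" "p > 0" "k \<le> k1" "k \<le> k2"
  shows "ppow_mult p k (padic_trunc p (padic_add p a b) k - (padic_trunc p a k1 + padic_trunc p b k2))"
proof -
  obtain Na Nb where z: "zero_below Na a" "zero_below Nb b" using padic_carrier_zero_below assms by metis
  define M where "M = nat (max (max k1 k2) 0)"
  have M: "k1 \<le> int M" "k2 \<le> int M" "k \<le> int M - 0" using assms unfolding M_def by auto
  have 1: "ppow_mult p k (padic_trunc p (padic_add p a b) k - (padic_trunc p a (int M) + padic_trunc p b (int M)))"
    using padic_cauchy_seq.padic_of_approx_trunc[OF padic_cauchy_seq_add[OF assms(1-3) z] M(3)] unfolding padic_add_def .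
  have 2: "ppow_mult p k (padic_trunc p a (int M) - padic_trunc p a k1)"
    using ppow_mult_mono[OF padic_carrier_trunc_diff_ppow_mult[OF assms(1) M(1) assms(3)] assms(4) assms(3)] .
  have 3: "ppow_mult p k (padic_trunc p b (int M) - padic_trunc p b k2)"
    using ppow_mult_mono[OF padic_carrier_trunc_diff_ppow_mult[OF assms(2) M(2) assms(3)] assms(5) assms(3)] .
  have "ppow_mult p k ((padic_trunc p (padic_add p a b) k - (padic_trunc p a (int M) + padic_trunc p b (int M)))
     + (padic_trunc p a (int M) - padic_trunc p a k1) + (padic_trunc p b (int M) - padic_trunc p b k2))"
    using ppow_mult_add[OF ppow_mult_add[OF 1 2] 3] .
  thus ?thesis by (simp add: algebra_simps)
qed

lemma padic_trunc_prod_diff: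
  assumes "zero_below Na a" "zero_below Nb b" "k1 \<le> k1'" "k2 \<le> k2'" "p > 0"
    and "k \<le> k1 + Nb" "k \<le> Na + k2"
  shows "ppow_mult p k (padic_trunc p a k1' * padic_trunc p b k2' - padic_trunc p a k1 * padic_trunc p b k2)"
proof -
  have e: "padic_trunc p a k1' * padic_trunc p b k2' - padic_trunc p a k1 * padic_trunc p b k2
    = (padic_trunc p a k1' - padic_trunc p a k1) * padic_trunc p b k2'
      + padic_trunc p a k1 * (padic_trunc p b k2' - padic_trunc p b k2)"
    by (simp add: algebra_simps)
  have "ppow_mult p (k1 + Nb) ((padic_trunc p a k1' - padic_trunc p a k1) * padic_trunc p b k2')"
    by (rule ppow_mult_mult[OF padic_trunc_diff_ppow_mult[OF assms(1,3,5)] padic_trunc_ppow_mult[OF assms(2,5)] assms(5)])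
  moreover have "ppow_mult p (Na + k2) (padic_trunc p a k1 * (padic_trunc p b k2' - padic_trunc p b k2))"
    by (rule ppow_mult_mult[OF padic_trunc_ppow_mult[OF assms(1,5)] padic_trunc_diff_ppow_mult[OF assms(2,4,5)] assms(5)])
  ultimately show ?thesis unfolding e using ppow_mult_mono assms(5-7) by (metis ppow_mult_add)
qed

lemma padic_cauchy_seq_mult:
  assumes "p > 0" "zero_below Na a" "zero_below Nb b" "Na \<le> 0" "Nb \<le> 0"
  shows "padic_cauchy_seq p (\<lambda>m. padic_trunc p a (int m) * padic_trunc p b (int m)) (Na + Nb) (- (Na + Nb))"
proof
  fix m show "ppow_mult p (Na + Nb) (padic_trunc p a (int m) * padic_trunc p b (int m))"
    by (rule ppow_mult_mult[OF padic_trunc_ppow_mult[OF assms(2,1)] padic_trunc_ppow_mult[OF assms(3,1)] assms(1)])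
next
  fix m m' :: nat assume "m \<le> m'"
  show "ppow_mult p (int m - - (Na + Nb)) (padic_trunc p a (int m') * padic_trunc p b (int m') -
          padic_trunc p a (int m) * padic_trunc p b (int m))"
    by (rule padic_trunc_prod_diff[OF assms(2,3)]) (use \<open>m \<le> m'\<close> assms in auto)
qed (use assms in auto)

lemma padic_carrier_zero_below_nonpos: "x \<in> padic_carrier p \<Longrightarrow> \<exists>N\<le>0. zero_below N x"
  using padic_carrier_zero_below_le by blast

lemma padic_mult_carrier:
  assumes "a \<in> padic_carrier p" "b \<in> padic_carrier p" "p > 0"
  shows "padic_mult p a b \<in> padic_carrier p"
proof -
  obtain Na Nb where "zero_below Na a" "zero_below Nb b" "Na \<le> 0" "Nb \<le> 0" using padic_carrier_zero_below_nonpos assms by metis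
  from padic_cauchy_seq.padic_of_approx_carrier[OF padic_cauchy_seq_mult[OF assms(3) this]] show ?thesis unfolding padic_mult_def .
qed

lemma padic_mult_zero_below:
  assumes "p > 0" "zero_below Na a" "zero_below Nb b" "Na \<le> 0" "Nb \<le> 0"
  shows "zero_below (Na + Nb) (padic_mult p a b)"
  using padic_cauchy_seq.padic_of_approx_zero_below[OF padic_cauchy_seq_mult[OF assms]] unfolding padic_mult_def .

lemma padic_mult_trunc:
  assumes "a \<in> padic_carrier p" "b \<in> padic_carrier p" "p > 0"
  shows "\<exists>K\<ge>0. \<forall>k k1 k2. k + K \<le> k1 \<longrightarrow> k + K \<le> k2 \<longrightarrow>
           ppow_mult p k (padic_trunc p (padic_mult p a b) k - padic_trunc p a k1 * padic_trunc p b k2)"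
proof -
  obtain Na Nb where z: "zero_below Na a" "zero_below Nb b" "Na \<le> 0" "Nb \<le> 0" using padic_carrier_zero_below_nonpos assms by metis
  show ?thesis
  proof (intro exI[of _ "- (Na + Nb)"] conjI allI impI)
    fix k k1 k2 assume k: "k + - (Na + Nb) \<le> k1" "k + - (Na + Nb) \<le> k2"
    define M where "M = nat (max (max k1 k2) 0)"
    have M: "k1 \<le> int M" "k2 \<le> int M" "k \<le> int M - - (Na + Nb)" using k z unfolding M_def by auto
    have 1: "ppow_mult p k (padic_trunc p (padic_mult p a b) k - padic_trunc p a (int M) * padic_trunc p b (int M))"
      using padic_cauchy_seq.padic_of_approx_trunc[OF padic_cauchy_seq_mult[OF assms(3) z] M(3)] unfolding padic_mult_def .
    have 2: "ppow_mult p k (padic_trunc p a (int M) * padic_trunc p b (int M) - padic_trunc p a k1 * padic_trunc p b k2)"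
      by (rule padic_trunc_prod_diff[OF z(1,2) M(1,2) assms(3)]) (use k z in auto)
    show "ppow_mult p k (padic_trunc p (padic_mult p a b) k - padic_trunc p a k1 * padic_trunc p b k2)"
      using ppow_mult_add[OF 1 2] by simp
  qed (use z in auto)
qed

lemma padic_add_commute: "padic_add p a b = padic_add p b a"
  unfolding padic_add_def by (simp add: add.commute)

lemma padic_add_zero_right:
  assumes "a \<in> padic_carrier p" "p > 0"
  shows "padic_add p a padic_zero = a"
  by (rule padic_eqI[OF padic_add_carrier[OF assms(1) padic_zero_carrier[OF assms(2)] assms(2)] assms(1) assms(2)])
    (use padic_add_trunc[OF assms(1) padic_zero_carrier[OF assms(2)] assms(2), of k k k for k] in simp)

lemma padic_add_zero_left:
  assumes "a \<in> padic_carrier p" "p > 0"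
  shows "padic_add p padic_zero a = a"
  using padic_add_zero_right[OF assms] padic_add_commute by metis

lemma padic_add_assoc:
  assumes "a \<in> padic_carrier p" "b \<in> padic_carrier p" "c \<in> padic_carrier p" "p > 0"
  shows "padic_add p (padic_add p a b) c = padic_add p a (padic_add p b c)"
proof (rule padic_eqI)
  fix k
  let ?t = "padic_trunc p"
  have ab: "padic_add p a b \<in> padic_carrier p" and bc: "padic_add p b c \<in> padic_carrier p"
    using padic_add_carrier assms by auto
  have 1: "ppow_mult p k (?t (padic_add p (padic_add p a b) c) k - (?t (padic_add p a b) k + ?t c k))"
    by (rule padic_add_trunc[OF ab assms(3,4)]) auto
  have 2: "ppow_mult p k (?t (padic_add p a b) k - (?t a k + ?t b k))"
    by (rule padic_add_trunc[OF assms(1,2,4)]) auto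
  have 3: "ppow_mult p k (?t (padic_add p a (padic_add p b c)) k - (?t a k + ?t (padic_add p b c) k))"
    by (rule padic_add_trunc[OF assms(1) bc assms(4)]) auto
  have 4: "ppow_mult p k (?t (padic_add p b c) k - (?t b k + ?t c k))"
    by (rule padic_add_trunc[OF assms(2,3,4)]) auto
  have "ppow_mult p k ((?t (padic_add p (padic_add p a b) c) k - (?t (padic_add p a b) k + ?t c k))
      + (?t (padic_add p a b) k - (?t a k + ?t b k))
      - (?t (padic_add p a (padic_add p b c)) k - (?t a k + ?t (padic_add p b c) k))
      - (?t (padic_add p b c) k - (?t b k + ?t c k)))"
    using ppow_mult_diff[OF ppow_mult_diff[OF ppow_mult_add[OF 1 2] 3] 4] .
  thus "ppow_mult p k (?t (padic_add p (padic_add p a b) c) k - ?t (padic_add p a (padic_add p b c)) k)"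
    by (simp add: algebra_simps)
qed (use padic_add_carrier assms in auto)

definition padic_neg :: "nat \<Rightarrow> padic \<Rightarrow> padic" where
  "padic_neg p a = padic_of_approx p (\<lambda>m. of_nat p powi (int m) - padic_trunc p a (int m))"

lemma padic_cauchy_seq_neg:
  assumes "a \<in> padic_carrier p" "p > 0" "zero_below N a" "N \<le> 0"
  shows "padic_cauchy_seq p (\<lambda>m. of_nat p powi (int m) - padic_trunc p a (int m)) N 0"
proof
  fix m :: nat
  show "ppow_mult p N (of_nat p powi (int m) - padic_trunc p a (int m))"
  proof (rule ppow_mult_diff)
    show "ppow_mult p N (of_nat p powi (int m))" by (rule ppow_mult_mono[OF ppow_mult_powi _ assms(2)]) (use assms in auto)
  qed (rule padic_trunc_ppow_mult[OF assms(3,2)])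
next
  fix m m' :: nat assume "m \<le> m'"
  have 1: "ppow_mult p (int m) (of_nat p powi (int m') - of_nat p powi (int m))"
  proof (rule ppow_mult_diff)
    show "ppow_mult p (int m) (of_nat p powi (int m'))" by (rule ppow_mult_mono[OF ppow_mult_powi _ assms(2)]) (use \<open>m \<le> m'\<close> in auto)
  qed (rule ppow_mult_powi)
  have 2: "ppow_mult p (int m) (padic_trunc p a (int m') - padic_trunc p a (int m))"
    using padic_trunc_diff_ppow_mult[OF assms(3)] \<open>m \<le> m'\<close> assms by auto
  show "ppow_mult p (int m - 0) (of_nat p powi (int m') - padic_trunc p a (int m') -
          (of_nat p powi (int m) - padic_trunc p a (int m)))"
    using ppow_mult_diff[OF 1 2] by (simp add: algebra_simps)
qed (use assms in auto)

lemma padic_neg_carrier: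
  assumes "a \<in> padic_carrier p" "p > 0"
  shows "padic_neg p a \<in> padic_carrier p"
proof -
  obtain N where "zero_below N a" "N \<le> 0" using padic_carrier_zero_below_nonpos assms by metis
  from padic_cauchy_seq.padic_of_approx_carrier[OF padic_cauchy_seq_neg[OF assms this]] show ?thesis unfolding padic_neg_def .
qed

lemma padic_add_neg:
  assumes "a \<in> padic_carrier p" "p > 0"
  shows "padic_add p a (padic_neg p a) = padic_zero"
proof (rule padic_eqI)
  obtain N where z: "zero_below N a" "N \<le> 0" using padic_carrier_zero_below_nonpos assms by metis
  fix k
  let ?t = "padic_trunc p"
  define M where "M = nat (max k 0)"
  have M: "k \<le> int M - 0" unfolding M_def by auto
  have 1: "ppow_mult p k (?t (padic_add p a (padic_neg p a)) k - (?t a (int M) + ?t (padic_neg p a) k))"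
    by (rule padic_add_trunc[OF assms(1) padic_neg_carrier[OF assms] assms(2)]) (use M in auto)
  have 2: "ppow_mult p k (?t (padic_neg p a) k - (of_nat p powi (int M) - ?t a (int M)))"
    using padic_cauchy_seq.padic_of_approx_trunc[OF padic_cauchy_seq_neg[OF assms z] M] unfolding padic_neg_def .
  have 3: "ppow_mult p k (of_nat p powi (int M))" by (rule ppow_mult_mono[OF ppow_mult_powi _ assms(2)]) (use M in simp)
  have "ppow_mult p k ((?t (padic_add p a (padic_neg p a)) k - (?t a (int M) + ?t (padic_neg p a) k))
     + (?t (padic_neg p a) k - (of_nat p powi (int M) - ?t a (int M))) + of_nat p powi (int M))"
    using ppow_mult_add[OF ppow_mult_add[OF 1 2] 3] .
  thus "ppow_mult p k (?t (padic_add p a (padic_neg p a)) k - ?t padic_zero k)" by (simp add: algebra_simps)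
qed (use padic_add_carrier padic_neg_carrier assms padic_zero_carrier in auto)

lemma padic_mult_zero_right[simp]: "padic_mult p a padic_zero = padic_zero"
  unfolding padic_mult_def padic_trunc_zero by (simp add: padic_of_approx_def padic_zero_def)

lemma padic_mult_one_right:
  assumes "a \<in> padic_carrier p" "p > 1"
  shows "padic_mult p a padic_one = a"
proof (rule padic_eqI)
  fix k
  obtain K where K: "K \<ge> 0" "\<forall>k k1 k2. k + K \<le> k1 \<longrightarrow> k + K \<le> k2 \<longrightarrow>
           ppow_mult p k (padic_trunc p (padic_mult p a padic_one) k - padic_trunc p a k1 * padic_trunc p padic_one k2)"
    using padic_mult_trunc[OF assms(1) padic_one_carrier[OF assms(2)]] assms(2) by auto
  have 1: "ppow_mult p k (padic_trunc p (padic_mult p a padic_one) k - padic_trunc p a (k + K) * padic_trunc p padic_one (max (k + K) 1))"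
    using K by auto
  have "padic_trunc p padic_one (max (k + K) 1) = 1" by (simp add: padic_trunc_one)
  with 1 have 1: "ppow_mult p k (padic_trunc p (padic_mult p a padic_one) k - padic_trunc p a (k + K))" by simp
  have 2: "ppow_mult p k (padic_trunc p a (k + K) - padic_trunc p a k)"
    using padic_carrier_trunc_diff_ppow_mult[OF assms(1)] K assms(2) by auto
  show "ppow_mult p k (padic_trunc p (padic_mult p a padic_one) k - padic_trunc p a k)"
    using ppow_mult_add[OF 1 2] by (simp add: padic_trunc_one)
qed (use padic_mult_carrier padic_one_carrier assms in auto)

lemma padic_distrib_left:
  assumes "x \<in> padic_carrier p" "a \<in> padic_carrier p" "b \<in> padic_carrier p" "p > 0"
  shows "padic_mult p x (padic_add p a b) = padic_add p (padic_mult p x a) (padic_mult p x b)"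
proof (rule padic_eqI)
  fix k
  let ?t = "padic_trunc p"
  have ab: "padic_add p a b \<in> padic_carrier p" using padic_add_carrier assms by auto
  have xa: "padic_mult p x a \<in> padic_carrier p" and xb: "padic_mult p x b \<in> padic_carrier p"
    using padic_mult_carrier assms by auto
  obtain Nx where Nx: "zero_below Nx x" "Nx \<le> 0" using padic_carrier_zero_below_nonpos assms by metis
  obtain K1 where K1: "K1 \<ge> 0" "\<forall>k k1 k2. k + K1 \<le> k1 \<longrightarrow> k + K1 \<le> k2 \<longrightarrow>
           ppow_mult p k (?t (padic_mult p x (padic_add p a b)) k - ?t x k1 * ?t (padic_add p a b) k2)"
    using padic_mult_trunc[OF assms(1) ab assms(4)] by auto
  obtain K2 where K2: "K2 \<ge> 0" "\<forall>k k1 k2. k + K2 \<le> k1 \<longrightarrow> k + K2 \<le> k2 \<longrightarrow>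
           ppow_mult p k (?t (padic_mult p x a) k - ?t x k1 * ?t a k2)"
    using padic_mult_trunc[OF assms(1,2,4)] by auto
  obtain K3 where K3: "K3 \<ge> 0" "\<forall>k k1 k2. k + K3 \<le> k1 \<longrightarrow> k + K3 \<le> k2 \<longrightarrow>
           ppow_mult p k (?t (padic_mult p x b) k - ?t x k1 * ?t b k2)"
    using padic_mult_trunc[OF assms(1,3,4)] by auto
  define L where "L = k + K1 + K2 + K3 - Nx"
  have 1: "ppow_mult p k (?t (padic_mult p x (padic_add p a b)) k - ?t x L * ?t (padic_add p a b) L)"
    using K1 K2 K3 Nx unfolding L_def by auto
  have "ppow_mult p L (?t (padic_add p a b) L - (?t a L + ?t b L))"
    by (rule padic_add_trunc[OF assms(2,3,4)]) auto
  hence "ppow_mult p (Nx + L) (?t x L * (?t (padic_add p a b) L - (?t a L + ?t b L)))"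
    by (rule ppow_mult_mult[OF padic_trunc_ppow_mult[OF Nx(1) assms(4)] _ assms(4)])
  hence 2: "ppow_mult p k (?t x L * (?t (padic_add p a b) L - (?t a L + ?t b L)))"
    by (rule ppow_mult_mono[OF _ _ assms(4)]) (use K1 K2 K3 L_def in auto)
  have 3: "ppow_mult p k (?t (padic_add p (padic_mult p x a) (padic_mult p x b)) k - (?t (padic_mult p x a) k + ?t (padic_mult p x b) k))"
    by (rule padic_add_trunc[OF xa xb assms(4)]) auto
  have 4: "ppow_mult p k (?t (padic_mult p x a) k - ?t x L * ?t a L)"
    using K2 K1 K3 Nx unfolding L_def by auto
  have 5: "ppow_mult p k (?t (padic_mult p x b) k - ?t x L * ?t b L)"
    using K2 K1 K3 Nx unfolding L_def by auto
  have "ppow_mult p k ((?t (padic_mult p x (padic_add p a b)) k - ?t x L * ?t (padic_add p a b) L)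
     + ?t x L * (?t (padic_add p a b) L - (?t a L + ?t b L))
     - (?t (padic_add p (padic_mult p x a) (padic_mult p x b)) k - (?t (padic_mult p x a) k + ?t (padic_mult p x b) k))
     - (?t (padic_mult p x a) k - ?t x L * ?t a L) - (?t (padic_mult p x b) k - ?t x L * ?t b L))"
    using ppow_mult_diff[OF ppow_mult_diff[OF ppow_mult_diff[OF ppow_mult_add[OF 1 2] 3] 4] 5] .
  thus "ppow_mult p k (?t (padic_mult p x (padic_add p a b)) k - ?t (padic_add p (padic_mult p x a) (padic_mult p x b)) k)"
    by (simp add: algebra_simps)
qed (use padic_add_carrier padic_mult_carrier assms in auto)

lemma power_int_le_iff: "(1::'a::linordered_field) < x \<Longrightarrow> x powi a \<le> x powi b \<longleftrightarrow> a \<le> b"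
  by (metis linorder_not_le power_int_increasing less_imp_le power_int_strict_increasing)

definition padic_shift :: "int \<Rightarrow> padic \<Rightarrow> padic" where
  "padic_shift k y = (\<lambda>i. y (i - k))"

lemma padic_shift_0[simp]: "padic_shift 0 y = y" unfolding padic_shift_def by simp
lemma padic_shift_shift[simp]: "padic_shift j (padic_shift k y) = padic_shift (j + k) y" unfolding padic_shift_def by (simp add: algebra_simps)
lemma padic_shift_zero[simp]: "padic_shift k padic_zero = padic_zero" unfolding padic_shift_def padic_zero_def by simp

lemma padic_shift_carrier: "y \<in> padic_carrier p \<Longrightarrow> padic_shift k y \<in> padic_carrier p"
proof -
  assume y: "y \<in> padic_carrier p"
  then obtain N where "\<forall>i<N. y i = 0" unfolding padic_carrier_def by auto
  hence "\<forall>i<N+k. padic_shift k y i = 0" unfolding padic_shift_def by auto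
  thus ?thesis using y unfolding padic_carrier_def padic_shift_def by auto
qed

lemma zero_below_shift: "zero_below N y \<Longrightarrow> zero_below (N + k) (padic_shift k y)"
  unfolding zero_below_def padic_shift_def by auto

lemma padic_trunc_shift:
  assumes "p > 0"
  shows "padic_trunc p (padic_shift k y) m = of_nat p powi k * padic_trunc p y (m - k)"
proof -
  have e: "{i. i < m \<and> padic_shift k y i \<noteq> 0} = (\<lambda>j. j + k) ` {j. j < m - k \<and> y j \<noteq> 0}"
  proof (intro set_eqI iffI)
    fix i assume "i \<in> {i. i < m \<and> padic_shift k y i \<noteq> 0}"
    thus "i \<in> (\<lambda>j. j + k) ` {j. j < m - k \<and> y j \<noteq> 0}"
      unfolding padic_shift_def by (intro image_eqI[of _ _ "i - k"]) auto
  qed (auto simp: padic_shift_def)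
  have "padic_trunc p (padic_shift k y) m = (\<Sum>j\<in>{j. j < m - k \<and> y j \<noteq> 0}. of_nat (y j) * of_nat p powi (j + k))"
    unfolding padic_trunc_def e by (subst sum.reindex) (auto simp: inj_on_def padic_shift_def)
  also have "\<dots> = of_nat p powi k * padic_trunc p y (m - k)"
    unfolding padic_trunc_def sum_distrib_left using assms
    by (intro sum.cong refl) (simp add: power_int_add)
  finally show ?thesis .
qed

lemma padic_shift_add:
  assumes "a \<in> padic_carrier p" "b \<in> padic_carrier p" "p > 0"
  shows "padic_add p (padic_shift k a) (padic_shift k b) = padic_shift k (padic_add p a b)"
proof (rule padic_eqI)
  fix m
  let ?t = "padic_trunc p"
  have 1: "ppow_mult p m (?t (padic_add p (padic_shift k a) (padic_shift k b)) m - (?t (padic_shift k a) m + ?t (padic_shift k b) m))"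
    by (rule padic_add_trunc[OF padic_shift_carrier[OF assms(1)] padic_shift_carrier[OF assms(2)] assms(3)]) auto
  have "ppow_mult p (m - k) (?t (padic_add p a b) (m - k) - (?t a (m - k) + ?t b (m - k)))"
    by (rule padic_add_trunc[OF assms]) auto
  hence 2: "ppow_mult p (m - k + k) (of_nat p powi k * (?t (padic_add p a b) (m - k) - (?t a (m - k) + ?t b (m - k))))"
    by (rule ppow_mult_scale[OF _ assms(3)])
  hence 2: "ppow_mult p m (of_nat p powi k * (?t (padic_add p a b) (m - k) - (?t a (m - k) + ?t b (m - k))))" by simp
  show "ppow_mult p m (?t (padic_add p (padic_shift k a) (padic_shift k b)) m - ?t (padic_shift k (padic_add p a b)) m)"
    using ppow_mult_diff[OF 1 2] unfolding padic_trunc_shift[OF assms(3)] by (simp add: algebra_simps)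
qed (use assms padic_shift_carrier padic_add_carrier in auto)

lemma padic_shift_mult:
  assumes "a \<in> padic_carrier p" "b \<in> padic_carrier p" "p > 0"
  shows "padic_mult p (padic_shift j a) (padic_shift k b) = padic_shift (j + k) (padic_mult p a b)"
proof (rule padic_eqI)
  fix m
  let ?t = "padic_trunc p"
  obtain K where K: "K \<ge> 0" "\<forall>m k1 k2. m + K \<le> k1 \<longrightarrow> m + K \<le> k2 \<longrightarrow>
      ppow_mult p m (?t (padic_mult p (padic_shift j a) (padic_shift k b)) m - ?t (padic_shift j a) k1 * ?t (padic_shift k b) k2)"
    using padic_mult_trunc[OF padic_shift_carrier[OF assms(1), of j] padic_shift_carrier[OF assms(2), of k] assms(3)] by auto
  obtain K' where K': "K' \<ge> 0" "\<forall>m k1 k2. m + K' \<le> k1 \<longrightarrow> m + K' \<le> k2 \<longrightarrow>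
      ppow_mult p m (?t (padic_mult p a b) m - ?t a k1 * ?t b k2)"
    using padic_mult_trunc[OF assms] by auto
  define L where "L = m + K + K' + \<bar>j\<bar> + \<bar>k\<bar>"
  have 1: "ppow_mult p m (?t (padic_mult p (padic_shift j a) (padic_shift k b)) m - ?t (padic_shift j a) L * ?t (padic_shift k b) L)"
    using K K' unfolding L_def by auto
  have "ppow_mult p (m - (j + k)) (?t (padic_mult p a b) (m - (j + k)) - ?t a (L - j) * ?t b (L - k))"
    using K K' unfolding L_def by auto
  hence 2: "ppow_mult p (m - (j + k) + (j + k)) (of_nat p powi (j + k) * (?t (padic_mult p a b) (m - (j + k)) - ?t a (L - j) * ?t b (L - k)))"
    by (rule ppow_mult_scale[OF _ assms(3)])
  hence 2: "ppow_mult p m (of_nat p powi (j + k) * (?t (padic_mult p a b) (m - (j + k)) - ?t a (L - j) * ?t b (L - k)))" by simp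
  have pw: "(of_nat p :: rat) powi (j + k) = of_nat p powi j * of_nat p powi k"
    using assms(3) by (simp add: power_int_add)
  show "ppow_mult p m (?t (padic_mult p (padic_shift j a) (padic_shift k b)) m - ?t (padic_shift (j + k) (padic_mult p a b)) m)"
    using ppow_mult_diff[OF 1 2] unfolding padic_trunc_shift[OF assms(3)] pw by (simp add: algebra_simps)
qed (use assms padic_shift_carrier padic_mult_carrier in auto)

lemma padic_add_disjoint_digits:
  assumes "a \<in> padic_carrier p" "b \<in> padic_carrier p" "p > 0" "\<And>i. a i = 0 \<or> b i = 0"
  shows "padic_add p a b = (\<lambda>i. a i + b i)"
proof -
  obtain Na Nb where z: "zero_below Na a" "zero_below Nb b" using padic_carrier_zero_below assms by metis
  let ?N = "min Na Nb"
  have z': "zero_below ?N a" "zero_below ?N b" using z zero_below_mono by auto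
  have zs: "zero_below ?N (\<lambda>i. a i + b i)" using z' unfolding zero_below_def by auto
  have c: "(\<lambda>i. a i + b i) \<in> padic_carrier p"
    using zs assms(4) padic_carrier_digit_less[OF assms(1)] padic_carrier_digit_less[OF assms(2)]
    unfolding padic_carrier_def zero_below_def by (auto intro!: exI[of _ ?N]) (metis add_0 add_0_right)
  have tr: "padic_trunc p (\<lambda>i. a i + b i) k = padic_trunc p a k + padic_trunc p b k" for k
    unfolding padic_trunc_eq_sum[OF zs] padic_trunc_eq_sum[OF z'(1)] padic_trunc_eq_sum[OF z'(2)]
    by (simp add: sum.distrib[symmetric] algebra_simps)
  show ?thesis
    by (rule padic_eqI[OF padic_add_carrier[OF assms(1-3)] c assms(3)])
      (use padic_add_trunc[OF assms(1-3)] in \<open>simp add: tr\<close>)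
qed

definition padic_int :: "nat \<Rightarrow> padic \<Rightarrow> bool" where
  "padic_int p y \<longleftrightarrow> y \<in> padic_carrier p \<and> zero_below 0 y"

lemma padic_int_add: "padic_int p a \<Longrightarrow> padic_int p b \<Longrightarrow> p > 0 \<Longrightarrow> padic_int p (padic_add p a b)"
  unfolding padic_int_def using padic_add_carrier padic_add_zero_below by blast

lemma padic_int_mult: "padic_int p a \<Longrightarrow> padic_int p b \<Longrightarrow> p > 0 \<Longrightarrow> padic_int p (padic_mult p a b)"
  unfolding padic_int_def using padic_mult_carrier padic_mult_zero_below[of p 0 a 0 b] by auto

lemma padic_int_zero: "p > 0 \<Longrightarrow> padic_int p padic_zero" unfolding padic_int_def by simp
lemma padic_int_one: "p > 1 \<Longrightarrow> padic_int p padic_one" unfolding padic_int_def using padic_one_carrier zero_below_one by auto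

lemma padic_int_add_digit_cong:
  assumes "padic_int p a" "padic_int p b" "padic_int p a'" "padic_int p b'" "p > 0"
    and "\<And>i. i < m \<Longrightarrow> a i = a' i" "\<And>i. i < m \<Longrightarrow> b i = b' i" "i < m"
  shows "padic_add p a b i = padic_add p a' b' i"
proof (cases "i < 0")
  case True
  thus ?thesis using padic_int_add[OF assms(1,2,5)] padic_int_add[OF assms(3,4,5)] unfolding padic_int_def zero_below_def by auto
next
  case False
  hence m: "int (nat m) - 0 > i" using assms(8) by auto
  have c: "a \<in> padic_carrier p" "b \<in> padic_carrier p" "a' \<in> padic_carrier p" "b' \<in> padic_carrier p"
    "zero_below 0 a" "zero_below 0 b" "zero_below 0 a'" "zero_below 0 b'" using assms unfolding padic_int_def by auto
  have "padic_add p a b i = rat_digit p (padic_trunc p a (int (nat m)) + padic_trunc p b (int (nat m))) i"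
    using padic_cauchy_seq.padic_of_approx_digit[OF padic_cauchy_seq_add[OF c(1,2) assms(5) c(5,6)] m] unfolding padic_add_def by simp
  also have "\<dots> = rat_digit p (padic_trunc p a' (int (nat m)) + padic_trunc p b' (int (nat m))) i"
    using False assms(8) by (subst padic_trunc_cong[of _ a a'], simp add: assms(6), subst padic_trunc_cong[of _ b b'])
      (auto simp: assms(7))
  also have "\<dots> = padic_add p a' b' i"
    using padic_cauchy_seq.padic_of_approx_digit[OF padic_cauchy_seq_add[OF c(3,4) assms(5) c(7,8)] m] unfolding padic_add_def by simp
  finally show ?thesis .
qed

lemma padic_int_mult_digit_cong:
  assumes "padic_int p a" "padic_int p b" "padic_int p a'" "padic_int p b'" "p > 0"
    and "\<And>i. i < m \<Longrightarrow> a i = a' i" "\<And>i. i < m \<Longrightarrow> b i = b' i" "i < m"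
  shows "padic_mult p a b i = padic_mult p a' b' i"
proof (cases "i < 0")
  case True
  thus ?thesis using padic_int_mult[OF assms(1,2,5)] padic_int_mult[OF assms(3,4,5)] unfolding padic_int_def zero_below_def by auto
next
  case False
  hence m: "int (nat m) - - (0 + 0) > i" using assms(8) by auto
  have c: "a \<in> padic_carrier p" "b \<in> padic_carrier p" "a' \<in> padic_carrier p" "b' \<in> padic_carrier p"
    "zero_below 0 a" "zero_below 0 b" "zero_below 0 a'" "zero_below 0 b'" using assms unfolding padic_int_def by auto
  have "padic_mult p a b i = rat_digit p (padic_trunc p a (int (nat m)) * padic_trunc p b (int (nat m))) i"
    using padic_cauchy_seq.padic_of_approx_digit[OF padic_cauchy_seq_mult[OF assms(5) c(5,6)] m] unfolding padic_mult_def by simp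
  also have "\<dots> = rat_digit p (padic_trunc p a' (int (nat m)) * padic_trunc p b' (int (nat m))) i"
    using False assms(8) by (subst padic_trunc_cong[of _ a a'], simp add: assms(6), subst padic_trunc_cong[of _ b b'])
      (auto simp: assms(7))
  also have "\<dots> = padic_mult p a' b' i"
    using padic_cauchy_seq.padic_of_approx_digit[OF padic_cauchy_seq_mult[OF assms(5) c(7,8)] m] unfolding padic_mult_def by simp
  finally show ?thesis .
qed

section \<open>Absolute value and additive character\<close>

lemma padic_abs_zero[simp]: "padic_abs p padic_zero = 0"
  unfolding padic_abs_def by simp

lemma padic_abs_eq:
  assumes "y v \<noteq> 0" "zero_below v y"
  shows "padic_abs p y = real p powi (- v)"
proof -
  have "y \<noteq> padic_zero" using assms(1) unfolding padic_zero_def by auto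
  moreover have "(LEAST i. y i \<noteq> 0) = v"
    by (rule Least_equality) (use assms in \<open>auto simp: zero_below_def not_less[symmetric]\<close>)
  ultimately show ?thesis unfolding padic_abs_def by simp
qed

lemma padic_valuation_exists:
  assumes "y \<in> padic_carrier p" "y \<noteq> padic_zero"
  shows "\<exists>v. y v \<noteq> 0 \<and> zero_below v y"
proof -
  obtain N where N: "zero_below N y" using padic_carrier_zero_below[OF assms(1)] by auto
  obtain i where i: "y i \<noteq> 0" using assms(2) unfolding padic_zero_def by auto
  have "i \<ge> N" using N i unfolding zero_below_def by (meson not_le)
  hence ex: "\<exists>k::nat. y (N + int k) \<noteq> 0" using i by (intro exI[of _ "nat (i - N)"]) auto
  define k where "k = (LEAST k::nat. y (N + int k) \<noteq> 0)"
  have k: "y (N + int k) \<noteq> 0" unfolding k_def by (rule LeastI_ex[OF ex])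
  have "zero_below (N + int k) y"
    unfolding zero_below_def
  proof (intro allI impI)
    fix j assume j: "j < N + int k"
    show "y j = 0"
    proof (cases "j < N")
      case True thus ?thesis using N unfolding zero_below_def by auto
    next
      case False
      hence "nat (j - N) < k" using j by auto
      hence "\<not> y (N + int (nat (j - N))) \<noteq> 0" unfolding k_def by (rule not_less_Least)
      thus ?thesis using False by auto
    qed
  qed
  thus ?thesis using k by blast
qed

lemma padic_abs_nonneg: "padic_abs p y \<ge> 0"
  unfolding padic_abs_def by auto

lemma padic_abs_pos: "y \<in> padic_carrier p \<Longrightarrow> p > 0 \<Longrightarrow> y \<noteq> padic_zero \<Longrightarrow> padic_abs p y > 0"
  using padic_valuation_exists padic_abs_eq by fastforce

lemma padic_abs_le_iff:
  assumes "y \<in> padic_carrier p" "p > 1"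
  shows "padic_abs p y \<le> real p powi (- m) \<longleftrightarrow> zero_below m y"
proof (cases "y = padic_zero")
  case True thus ?thesis using assms by simp
next
  case False
  then obtain v where v: "y v \<noteq> 0" "zero_below v y" using padic_valuation_exists[OF assms(1)] by auto
  have "padic_abs p y \<le> real p powi (- m) \<longleftrightarrow> - v \<le> - m"
    unfolding padic_abs_eq[OF v] using assms(2) by (intro power_int_le_iff) auto
  also have "\<dots> \<longleftrightarrow> zero_below m y" using v unfolding zero_below_def by (auto simp: not_less[symmetric])
  finally show ?thesis .
qed

lemma padic_abs_shift:
  assumes "y \<in> padic_carrier p" "p > 0"
  shows "padic_abs p (padic_shift k y) = real p powi (- k) * padic_abs p y"
proof (cases "y = padic_zero")
  case True thus ?thesis by simp
next
  case False
  then obtain v where v: "y v \<noteq> 0" "zero_below v y" using padic_valuation_exists[OF assms(1)] by auto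
  have v': "padic_shift k y (v + k) \<noteq> 0" "zero_below (v + k) (padic_shift k y)" using v zero_below_shift unfolding padic_shift_def by auto
  have "real p powi (- k + - v) = real p powi (- k) * real p powi (- v)"
    by (rule power_int_add) (use assms(2) in simp)
  moreover have "- (v + k) = - k + - v" by simp
  moreover have "- v - k = - k + - v" by simp
  ultimately show ?thesis unfolding padic_abs_eq[OF v] padic_abs_eq[OF v'] by (simp only:)
qed

lemma padic_abs_values:
  assumes "y \<in> padic_carrier p" "p > 0"
  shows "padic_abs p y = 0 \<or> (\<exists>m. padic_abs p y = real p powi m)"
  using padic_valuation_exists[OF assms(1)] padic_abs_eq by (cases "y = padic_zero") auto

lemma padic_abs_eq_0_iff:
  assumes "y \<in> padic_carrier p" "p > 0"
  shows "padic_abs p y = 0 \<longleftrightarrow> y = padic_zero"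
  using padic_abs_pos[OF assms] by (metis padic_abs_zero less_irrefl)

lemma padic_char_zero[simp]: "padic_char p padic_zero = 1"
  unfolding padic_char_def padic_frac_def by simp

lemma norm_padic_char[simp]: "norm (padic_char p a) = 1"
  unfolding padic_char_def by simp

lemma padic_char_add:
  assumes "a \<in> padic_carrier p" "b \<in> padic_carrier p" "p > 0"
  shows "padic_char p (padic_add p a b) = padic_char p a * padic_char p b"
proof -
  have "ppow_mult p 0 (padic_trunc p (padic_add p a b) 0 - (padic_trunc p a 0 + padic_trunc p b 0))"
    by (rule padic_add_trunc[OF assms]) auto
  then obtain z where z: "padic_frac p (padic_add p a b) = padic_frac p a + padic_frac p b + of_int z"
    unfolding ppow_mult_def padic_frac_def by (auto simp: algebra_simps)
  have "padic_char p (padic_add p a b) = cis (2 * pi * real_of_rat (padic_frac p a)) *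
        cis (2 * pi * real_of_rat (padic_frac p b)) * cis (2 * pi * of_int z)"
    unfolding padic_char_def z by (simp add: cis_mult of_rat_add algebra_simps)
  thus ?thesis unfolding padic_char_def by simp
qed

lemma padic_pow_Suc: "padic_pow p x (Suc k) = padic_mult p x (padic_pow p x k)"
  unfolding padic_pow_def by simp

lemma padic_pow_0: "padic_pow p x 0 = padic_one"
  unfolding padic_pow_def by simp

lemma padic_pow_carrier: "x \<in> padic_carrier p \<Longrightarrow> p > 1 \<Longrightarrow> padic_pow p x k \<in> padic_carrier p"
  by (induction k) (auto simp: padic_pow_0 padic_pow_Suc padic_one_carrier padic_mult_carrier)

lemma padic_pow_int: "padic_int p x \<Longrightarrow> p > 1 \<Longrightarrow> padic_int p (padic_pow p x k)"
  by (induction k) (auto simp: padic_pow_0 padic_pow_Suc padic_int_one padic_int_mult)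

lemma padic_pow_digit_cong:
  assumes "padic_int p x" "padic_int p x'" "p > 1" "\<And>i. i < m \<Longrightarrow> x i = x' i" "i < m"
  shows "padic_pow p x k i = padic_pow p x' k i"
  using assms(5)
proof (induction k arbitrary: i)
  case (Suc k)
  show ?case unfolding padic_pow_Suc
    by (rule padic_int_mult_digit_cong[OF assms(1) padic_pow_int[OF assms(1,3)] assms(2) padic_pow_int[OF assms(2,3)] _ assms(4) Suc.IH Suc.prems])
      (use assms in auto)
qed (simp add: padic_pow_0)

lemma padic_pow_shift:
  assumes "x \<in> padic_carrier p" "p > 1"
  shows "padic_pow p (padic_shift j x) k = padic_shift (j * int k) (padic_pow p x k)"
proof (induction k)
  case 0 thus ?case by (simp add: padic_pow_0)
next
  case (Suc k)
  have "padic_pow p (padic_shift j x) (Suc k) = padic_mult p (padic_shift j x) (padic_shift (j * int k) (padic_pow p x k))"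
    unfolding padic_pow_Suc Suc ..
  also have "\<dots> = padic_shift (j + j * int k) (padic_mult p x (padic_pow p x k))"
    by (rule padic_shift_mult[OF assms(1) padic_pow_carrier[OF assms] ]) (use assms in simp)
  finally show ?case by (simp add: padic_pow_Suc algebra_simps)
qed

definition monomial_fold :: "nat \<Rightarrow> (nat \<Rightarrow> nat) \<Rightarrow> padicvec \<Rightarrow> nat list \<Rightarrow> padic" where
  "monomial_fold p \<alpha> \<xi> js = foldr (\<lambda>j acc. padic_mult p (padic_pow p (\<xi> j) (\<alpha> j)) acc) js padic_one"

lemma monomial_eval_eq_fold: "monomial_eval p n \<alpha> \<xi> = monomial_fold p \<alpha> \<xi> [0..<n]"
  unfolding monomial_eval_def monomial_fold_def ..

lemma monomial_fold_Cons: "monomial_fold p \<alpha> \<xi> (j # js) = padic_mult p (padic_pow p (\<xi> j) (\<alpha> j)) (monomial_fold p \<alpha> \<xi> js)"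
  unfolding monomial_fold_def by simp

lemma monomial_fold_Nil: "monomial_fold p \<alpha> \<xi> [] = padic_one"
  unfolding monomial_fold_def by simp

lemma monomial_fold_carrier:
  "(\<And>j. j \<in> set js \<Longrightarrow> \<xi> j \<in> padic_carrier p) \<Longrightarrow> p > 1 \<Longrightarrow> monomial_fold p \<alpha> \<xi> js \<in> padic_carrier p"
  by (induction js) (auto simp: monomial_fold_Cons monomial_fold_Nil padic_one_carrier padic_mult_carrier padic_pow_carrier)

lemma monomial_fold_int:
  "(\<And>j. j \<in> set js \<Longrightarrow> padic_int p (\<xi> j)) \<Longrightarrow> p > 1 \<Longrightarrow> padic_int p (monomial_fold p \<alpha> \<xi> js)"
  by (induction js) (auto simp: monomial_fold_Cons monomial_fold_Nil padic_int_one padic_int_mult padic_pow_int)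

lemma monomial_fold_digit_cong:
  assumes "\<And>j. j \<in> set js \<Longrightarrow> padic_int p (\<xi> j)" "\<And>j. j \<in> set js \<Longrightarrow> padic_int p (\<xi>' j)" "p > 1"
    "\<And>j i. j \<in> set js \<Longrightarrow> i < m \<Longrightarrow> \<xi> j i = \<xi>' j i" "i < m"
  shows "monomial_fold p \<alpha> \<xi> js i = monomial_fold p \<alpha> \<xi>' js i"
  using assms
proof (induction js arbitrary: i)
  case Nil thus ?case by (simp add: monomial_fold_Nil)
next
  case (Cons j js)
  have z: "padic_int p (padic_pow p (\<xi> j) (\<alpha> j))" "padic_int p (padic_pow p (\<xi>' j) (\<alpha> j))"
    "padic_int p (monomial_fold p \<alpha> \<xi> js)" "padic_int p (monomial_fold p \<alpha> \<xi>' js)"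
    using Cons.prems by (auto intro!: padic_pow_int monomial_fold_int)
  have c1: "padic_pow p (\<xi> j) (\<alpha> j) i = padic_pow p (\<xi>' j) (\<alpha> j) i" if "i < m" for i
    by (rule padic_pow_digit_cong[OF _ _ _ _ \<open>i < m\<close>]) (use Cons.prems in auto)
  have c2: "monomial_fold p \<alpha> \<xi> js i = monomial_fold p \<alpha> \<xi>' js i" if "i < m" for i
    by (rule Cons.IH) (use Cons.prems \<open>i < m\<close> in auto)
  show ?case unfolding monomial_fold_Cons
    by (rule padic_int_mult_digit_cong[OF z(1,3,2,4) _ c1 c2 Cons.prems(5)]) (use Cons.prems in auto)
qed

lemma monomial_fold_shift:
  assumes "\<And>j. j \<in> set js \<Longrightarrow> \<xi> j \<in> padic_carrier p" "p > 1"
  shows "monomial_fold p \<alpha> (\<lambda>j. padic_shift k (\<xi> j)) js = padic_shift (k * int (sum_list (map \<alpha> js))) (monomial_fold p \<alpha> \<xi> js)"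
  using assms(1)
proof (induction js)
  case Nil thus ?case by (simp add: monomial_fold_Nil)
next
  case (Cons j js)
  have "monomial_fold p \<alpha> (\<lambda>j. padic_shift k (\<xi> j)) (j # js)
      = padic_mult p (padic_shift (k * int (\<alpha> j)) (padic_pow p (\<xi> j) (\<alpha> j)))
                     (padic_shift (k * int (sum_list (map \<alpha> js))) (monomial_fold p \<alpha> \<xi> js))"
  proof -
    have "padic_pow p (padic_shift k (\<xi> j)) (\<alpha> j) = padic_shift (k * int (\<alpha> j)) (padic_pow p (\<xi> j) (\<alpha> j))"
      by (rule padic_pow_shift) (use Cons.prems assms(2) in auto)
    thus ?thesis unfolding monomial_fold_Cons using Cons by simp
  qed
  also have "\<dots> = padic_shift (k * int (\<alpha> j) + k * int (sum_list (map \<alpha> js)))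
                      (padic_mult p (padic_pow p (\<xi> j) (\<alpha> j)) (monomial_fold p \<alpha> \<xi> js))"
    by (rule padic_shift_mult[OF padic_pow_carrier monomial_fold_carrier]) (use Cons.prems assms(2) in auto)
  finally show ?case by (simp add: monomial_fold_Cons algebra_simps)
qed

definition poly_fold :: "nat \<Rightarrow> nat \<Rightarrow> padicvec \<Rightarrow> padic_poly \<Rightarrow> padic" where
  "poly_fold p n \<xi> f = foldr (\<lambda>(c, \<alpha>) acc. padic_add p (padic_mult p c (monomial_eval p n \<alpha> \<xi>)) acc) f padic_zero"

lemma poly_eval_eq_fold: "poly_eval p n f \<xi> = poly_fold p n \<xi> f"
  unfolding poly_eval_def poly_fold_def ..

lemma poly_fold_Cons: "poly_fold p n \<xi> ((c, \<alpha>) # f) = padic_add p (padic_mult p c (monomial_eval p n \<alpha> \<xi>)) (poly_fold p n \<xi> f)"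
  unfolding poly_fold_def by simp

lemma poly_fold_Nil: "poly_fold p n \<xi> [] = padic_zero"
  unfolding poly_fold_def by simp

lemma poly_eval_carrier:
  assumes "\<And>c \<alpha>. (c, \<alpha>) \<in> set f \<Longrightarrow> c \<in> padic_carrier p" "\<And>j. j < n \<Longrightarrow> \<xi> j \<in> padic_carrier p" "p > 1"
  shows "poly_eval p n f \<xi> \<in> padic_carrier p"
  unfolding poly_eval_eq_fold using assms(1)
proof (induction f)
  case (Cons t f)
  obtain c \<alpha> where t: "t = (c, \<alpha>)" by force
  have m: "monomial_eval p n \<alpha> \<xi> \<in> padic_carrier p"
    unfolding monomial_eval_eq_fold by (rule monomial_fold_carrier) (use assms in auto)
  show ?case unfolding t poly_fold_Cons
    by (rule padic_add_carrier[OF padic_mult_carrier[OF _ m]]) (use Cons assms(3) t in auto)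
qed (use assms in \<open>simp add: poly_fold_Nil\<close>)

lemma poly_eval_int:
  assumes "\<And>c \<alpha>. (c, \<alpha>) \<in> set f \<Longrightarrow> padic_int p c" "\<And>j. j < n \<Longrightarrow> padic_int p (\<xi> j)" "p > 1"
  shows "padic_int p (poly_eval p n f \<xi>)"
  unfolding poly_eval_eq_fold using assms(1)
proof (induction f)
  case (Cons t f)
  obtain c \<alpha> where t: "t = (c, \<alpha>)" by force
  have m: "padic_int p (monomial_eval p n \<alpha> \<xi>)"
    unfolding monomial_eval_eq_fold by (rule monomial_fold_int) (use assms in auto)
  show ?case unfolding t poly_fold_Cons
    by (rule padic_int_add[OF padic_int_mult[OF _ m]]) (use Cons assms(3) t in auto)
qed (use assms in \<open>simp add: poly_fold_Nil padic_int_zero\<close>)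

lemma poly_eval_digit_cong:
  assumes "\<And>c \<alpha>. (c, \<alpha>) \<in> set f \<Longrightarrow> padic_int p c" "\<And>j. j < n \<Longrightarrow> padic_int p (\<xi> j)"
    "\<And>j. j < n \<Longrightarrow> padic_int p (\<xi>' j)" "p > 1"
    "\<And>j i. j < n \<Longrightarrow> i < m \<Longrightarrow> \<xi> j i = \<xi>' j i" "i < m"
  shows "poly_eval p n f \<xi> i = poly_eval p n f \<xi>' i"
  unfolding poly_eval_eq_fold using assms(1,6)
proof (induction f arbitrary: i)
  case (Cons t f)
  obtain c \<alpha> where t: "t = (c, \<alpha>)" by force
  have m: "padic_int p (monomial_eval p n \<alpha> \<xi>)" "padic_int p (monomial_eval p n \<alpha> \<xi>')"
    unfolding monomial_eval_eq_fold by (rule monomial_fold_int, use assms in auto)+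
  have mc: "monomial_eval p n \<alpha> \<xi> i = monomial_eval p n \<alpha> \<xi>' i" if "i < m" for i
    unfolding monomial_eval_eq_fold by (rule monomial_fold_digit_cong) (use assms that in auto)
  have c: "padic_int p c" using Cons.prems t by auto
  have pz: "padic_int p (poly_fold p n \<xi> f)" "padic_int p (poly_fold p n \<xi>' f)"
    using poly_eval_int[of f p n \<xi>] poly_eval_int[of f p n \<xi>'] Cons.prems assms unfolding poly_eval_eq_fold by auto
  show ?case unfolding t poly_fold_Cons
  proof (rule padic_int_add_digit_cong[OF padic_int_mult[OF c m(1)] pz(1) padic_int_mult[OF c m(2)] pz(2) _ _ _ Cons.prems(2)])
    fix i assume "i < m"
    show "padic_mult p c (monomial_eval p n \<alpha> \<xi>) i = padic_mult p c (monomial_eval p n \<alpha> \<xi>') i"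
      by (rule padic_int_mult_digit_cong[OF c m(1) c m(2) _ _ mc \<open>i < m\<close>]) (use assms in auto)
  next
    fix i assume "i < m"
    show "poly_fold p n \<xi> f i = poly_fold p n \<xi>' f i" by (rule Cons.IH) (use Cons.prems \<open>i < m\<close> in auto)
  qed (use assms in auto)
qed (simp add: poly_fold_Nil)

lemma poly_eval_shift:
  assumes f_homogeneous: "padic_homogeneous p n d f" and xi: "\<And>j. j < n \<Longrightarrow> \<xi> j \<in> padic_carrier p" and p: "p > 1"
  shows "poly_eval p n f (\<lambda>j. padic_shift k (\<xi> j)) = padic_shift (k * int d) (poly_eval p n f \<xi>)"
  unfolding poly_eval_eq_fold using f_homogeneous
proof (induction f)
  case Nil thus ?case by (simp add: poly_fold_Nil)
next
  case (Cons t f)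
  obtain c \<alpha> where t: "t = (c, \<alpha>)" by force
  have c: "c \<in> padic_carrier p" "(\<Sum>j<n. \<alpha> j) = d" using Cons.prems t unfolding padic_homogeneous_def by auto
  have hf: "padic_homogeneous p n d f" using Cons.prems unfolding padic_homogeneous_def by auto
  have sl: "sum_list (map \<alpha> [0..<n]) = d"
    using c(2) sum_set_upt_conv_sum_list_nat[of \<alpha> 0 n] by (simp add: atLeast0LessThan)
  have mc: "monomial_eval p n \<alpha> \<xi> \<in> padic_carrier p"
    unfolding monomial_eval_eq_fold by (rule monomial_fold_carrier) (use xi p in auto)
  have me: "monomial_eval p n \<alpha> (\<lambda>j. padic_shift k (\<xi> j)) = padic_shift (k * int d) (monomial_eval p n \<alpha> \<xi>)"
    unfolding monomial_eval_eq_fold using monomial_fold_shift[where js="[0..<n]" and \<xi>=\<xi> and k=k and \<alpha>=\<alpha> and p=p] xi p sl by auto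
  have pc: "poly_fold p n \<xi> f \<in> padic_carrier p"
    using poly_eval_carrier[of f p n \<xi>] hf xi p unfolding poly_eval_eq_fold padic_homogeneous_def by auto
  have "padic_mult p c (padic_shift (k * int d) (monomial_eval p n \<alpha> \<xi>)) = padic_shift (k * int d) (padic_mult p c (monomial_eval p n \<alpha> \<xi>))"
    using padic_shift_mult[OF c(1) mc, of 0 "k * int d"] p by simp
  thus ?case unfolding t poly_fold_Cons me Cons.IH[OF hf]
    using padic_shift_add[OF padic_mult_carrier[OF c(1) mc] pc] p by simp
qed

lemma qpn_carrier: "x \<in> qpn p n \<Longrightarrow> j < n \<Longrightarrow> x j \<in> padic_carrier p"
  unfolding qpn_def by auto

lemma qpn_out: "x \<in> qpn p n \<Longrightarrow> \<not> j < n \<Longrightarrow> x j = padic_zero"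
  unfolding qpn_def by auto

lemma qpnI: "(\<And>j. j < n \<Longrightarrow> x j \<in> padic_carrier p) \<Longrightarrow> (\<And>j. \<not> j < n \<Longrightarrow> x j = padic_zero) \<Longrightarrow> x \<in> qpn p n"
  unfolding qpn_def by auto

lemma padic_vzero_qpn: "p > 0 \<Longrightarrow> padic_vzero \<in> qpn p n"
  unfolding qpn_def padic_vzero_def by auto

lemma vadd_qpn: "a \<in> qpn p n \<Longrightarrow> b \<in> qpn p n \<Longrightarrow> p > 0 \<Longrightarrow> vadd p n a b \<in> qpn p n"
  unfolding vadd_def by (rule qpnI) (auto simp: qpn_carrier padic_add_carrier)

definition vneg :: "nat \<Rightarrow> nat \<Rightarrow> padicvec \<Rightarrow> padicvec" where
  "vneg p n a = (\<lambda>j. if j < n then padic_neg p (a j) else padic_zero)"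

lemma vneg_qpn: "a \<in> qpn p n \<Longrightarrow> p > 0 \<Longrightarrow> vneg p n a \<in> qpn p n"
  unfolding vneg_def by (rule qpnI) (auto simp: qpn_carrier padic_neg_carrier)

lemma vadd_vzero_left: "a \<in> qpn p n \<Longrightarrow> p > 0 \<Longrightarrow> vadd p n padic_vzero a = a"
  unfolding vadd_def padic_vzero_def by (auto simp: fun_eq_iff padic_add_zero_left qpn_carrier qpn_out)

lemma vadd_assoc: "a \<in> qpn p n \<Longrightarrow> b \<in> qpn p n \<Longrightarrow> c \<in> qpn p n \<Longrightarrow> p > 0 \<Longrightarrow>
    vadd p n (vadd p n a b) c = vadd p n a (vadd p n b c)"
  unfolding vadd_def by (auto simp: fun_eq_iff padic_add_assoc qpn_carrier)

lemma vneg_vadd_cancel: "a \<in> qpn p n \<Longrightarrow> z \<in> qpn p n \<Longrightarrow> p > 0 \<Longrightarrow> vadd p n (vneg p n a) (vadd p n a z) = z"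
proof -
  assume a: "a \<in> qpn p n" and z: "z \<in> qpn p n" and p: "p > 0"
  have "vadd p n (vneg p n a) (vadd p n a z) = vadd p n (vadd p n (vneg p n a) a) z"
    using vadd_assoc[OF vneg_qpn[OF a p] a z p] by simp
  also have "vadd p n (vneg p n a) a = padic_vzero"
    unfolding vadd_def vneg_def padic_vzero_def
    by (auto simp: fun_eq_iff padic_add_commute[of p "padic_neg p _"] padic_add_neg qpn_carrier[OF a] p)
  finally show ?thesis using vadd_vzero_left[OF z p] by simp
qed

lemma vadd_vneg_cancel: "a \<in> qpn p n \<Longrightarrow> z \<in> qpn p n \<Longrightarrow> p > 0 \<Longrightarrow> vadd p n a (vadd p n (vneg p n a) z) = z"
proof -
  assume a: "a \<in> qpn p n" and z: "z \<in> qpn p n" and p: "p > 0"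
  have "vadd p n a (vadd p n (vneg p n a) z) = vadd p n (vadd p n a (vneg p n a)) z"
    using vadd_assoc[OF a vneg_qpn[OF a p] z p] by simp
  also have "vadd p n a (vneg p n a) = padic_vzero"
    unfolding vadd_def vneg_def padic_vzero_def
    by (auto simp: fun_eq_iff padic_add_neg qpn_carrier[OF a] p)
  finally show ?thesis using vadd_vzero_left[OF z p] by simp
qed

definition vec_shift :: "int \<Rightarrow> padicvec \<Rightarrow> padicvec" where
  "vec_shift k x = (\<lambda>j. padic_shift k (x j))"

lemma vec_shift_qpn: "x \<in> qpn p n \<Longrightarrow> vec_shift k x \<in> qpn p n"
  unfolding vec_shift_def by (rule qpnI) (auto simp: qpn_carrier qpn_out padic_shift_carrier)

lemma vec_shift_shift[simp]: "vec_shift j (vec_shift k x) = vec_shift (j + k) x" unfolding vec_shift_def by simp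
lemma vec_shift_0[simp]: "vec_shift 0 x = x" unfolding vec_shift_def by simp

lemma vadd_vec_shift: "a \<in> qpn p n \<Longrightarrow> b \<in> qpn p n \<Longrightarrow> p > 0 \<Longrightarrow> vadd p n (vec_shift k a) (vec_shift k b) = vec_shift k (vadd p n a b)"
  unfolding vadd_def vec_shift_def by (auto simp: fun_eq_iff padic_shift_add qpn_carrier)

lemma padic_norm_nonneg: "n \<ge> 1 \<Longrightarrow> padic_norm p n x \<ge> 0"
proof -
  assume False: "n \<ge> 1"
  hence "padic_abs p (x 0) \<le> padic_norm p n x" unfolding padic_norm_def by (intro Max_ge) auto
  thus ?thesis using padic_abs_nonneg[of p "x 0"] by linarith
qed

lemma padic_norm_le_iff:
  assumes "x \<in> qpn p n" "n \<ge> 1" "p > 1"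
  shows "padic_norm p n x \<le> real p powi (- m) \<longleftrightarrow> (\<forall>j<n. zero_below m (x j))"
proof -
  have "padic_norm p n x \<le> real p powi (- m) \<longleftrightarrow> (\<forall>j<n. padic_abs p (x j) \<le> real p powi (- m))"
  proof -
    have "0 \<in> {..<n}" using assms by simp
    hence "{..<n} \<noteq> {}" by blast
    thus ?thesis unfolding padic_norm_def by (subst Max_le_iff) auto
  qed
  also have "\<dots> \<longleftrightarrow> (\<forall>j<n. zero_below m (x j))" using padic_abs_le_iff qpn_carrier assms by blast
  finally show ?thesis .
qed

lemma padic_norm_attained:
  assumes "n \<ge> 1"
  shows "\<exists>j<n. padic_norm p n x = padic_abs p (x j)"
proof -
  have "padic_norm p n x \<in> (\<lambda>j. padic_abs p (x j)) ` {..<n}"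
  proof -
    have "0 \<in> {..<n}" using assms by simp
    thus ?thesis unfolding padic_norm_def by (intro Max_in) auto
  qed
  thus ?thesis by auto
qed

lemma padic_norm_ge: "j < n \<Longrightarrow> padic_abs p (x j) \<le> padic_norm p n x"
  unfolding padic_norm_def by (intro Max_ge) auto

lemma padic_norm_values:
  assumes "x \<in> qpn p n" "n \<ge> 1" "p > 0"
  shows "padic_norm p n x = 0 \<or> (\<exists>m. padic_norm p n x = real p powi m)"
  using padic_norm_attained[OF assms(2), of p x] padic_abs_values[OF qpn_carrier[OF assms(1)] assms(3)] by metis

lemma padic_norm_eq_0_iff:
  assumes "x \<in> qpn p n" "n \<ge> 1" "p > 0"
  shows "padic_norm p n x = 0 \<longleftrightarrow> x = padic_vzero"
proof
  assume h: "padic_norm p n x = 0"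
  show "x = padic_vzero"
  proof
    fix j show "x j = padic_vzero j"
    proof (cases "j < n")
      case True
      hence "padic_abs p (x j) = 0" using padic_norm_ge[OF True, of p x] h padic_abs_nonneg[of p "x j"] by linarith
      thus ?thesis using padic_abs_eq_0_iff[OF qpn_carrier[OF assms(1) True] assms(3)] by (simp add: padic_vzero_def)
    qed (use assms qpn_out in \<open>auto simp: padic_vzero_def\<close>)
  qed
next
  assume "x = padic_vzero"
  moreover have "0 \<in> {..<n}" using assms(2) by simp
  hence "{..<n} \<noteq> {}" by blast
  ultimately show "padic_norm p n x = 0" unfolding padic_norm_def padic_vzero_def
    by (simp add: image_constant_conv)
qed

lemma padic_norm_leading_digit:
  assumes "x \<in> qpn p n" "n \<ge> 1" "p > 1" "x \<noteq> padic_vzero"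
  shows "\<exists>w. padic_norm p n x = real p powi (- w) \<and> (\<forall>j<n. zero_below w (x j)) \<and> (\<exists>j<n. x j w \<noteq> 0)"
proof -
  obtain m where m: "padic_norm p n x = real p powi m"
    using padic_norm_values[OF assms(1,2)] padic_norm_eq_0_iff[OF assms(1,2)] assms by auto
  have 1: "\<forall>j<n. zero_below (- m) (x j)" using padic_norm_le_iff[OF assms(1-3), of "- m"] m by simp
  have "\<not> padic_norm p n x \<le> real p powi (- (- m + 1))"
    unfolding m using assms(3) by (subst power_int_le_iff) auto
  then obtain j where j: "j < n" "\<not> zero_below (- m + 1) (x j)" using padic_norm_le_iff[OF assms(1-3), of "- m + 1"] by auto
  then obtain i where i: "i < - m + 1" "x j i \<noteq> 0" unfolding zero_below_def by auto
  have "i = - m" using 1 i j unfolding zero_below_def by (meson linorder_not_less zless_add1_eq)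
  thus ?thesis using 1 i j m by (intro exI[of _ "- m"]) auto
qed

definition dot_fold :: "nat \<Rightarrow> padicvec \<Rightarrow> padicvec \<Rightarrow> nat list \<Rightarrow> padic" where
  "dot_fold p x \<xi> js = foldr (\<lambda>j acc. padic_add p (padic_mult p (x j) (\<xi> j)) acc) js padic_zero"

lemma padic_dot_eq_fold: "padic_dot p n x \<xi> = dot_fold p x \<xi> [0..<n]"
  unfolding padic_dot_def dot_fold_def ..

lemma dot_fold_Cons: "dot_fold p x \<xi> (j # js) = padic_add p (padic_mult p (x j) (\<xi> j)) (dot_fold p x \<xi> js)"
  unfolding dot_fold_def by simp

lemma dot_fold_Nil: "dot_fold p x \<xi> [] = padic_zero"
  unfolding dot_fold_def by simp

lemma dot_fold_carrier: "(\<And>j. j \<in> set js \<Longrightarrow> x j \<in> padic_carrier p \<and> \<xi> j \<in> padic_carrier p) \<Longrightarrow> p > 0 \<Longrightarrow>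
   dot_fold p x \<xi> js \<in> padic_carrier p"
  by (induction js) (auto simp: dot_fold_Cons dot_fold_Nil padic_add_carrier padic_mult_carrier)

lemma padic_char_dot_fold_vadd:
  assumes "\<And>j. j \<in> set js \<Longrightarrow> x j \<in> padic_carrier p \<and> \<xi> j \<in> padic_carrier p \<and> \<eta> j \<in> padic_carrier p" "p > 0"
  shows "padic_char p (dot_fold p x (\<lambda>j. padic_add p (\<eta> j) (\<xi> j)) js) =
         padic_char p (dot_fold p x \<eta> js) * padic_char p (dot_fold p x \<xi> js)"
  using assms(1)
proof (induction js)
  case (Cons j js)
  have c: "x j \<in> padic_carrier p" "\<xi> j \<in> padic_carrier p" "\<eta> j \<in> padic_carrier p" using Cons.prems by auto
  have d: "dot_fold p x (\<lambda>j. padic_add p (\<eta> j) (\<xi> j)) js \<in> padic_carrier p"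
    "dot_fold p x \<eta> js \<in> padic_carrier p" "dot_fold p x \<xi> js \<in> padic_carrier p"
    by (rule dot_fold_carrier, use Cons.prems padic_add_carrier assms(2) in auto)+
  have "padic_mult p (x j) (padic_add p (\<eta> j) (\<xi> j)) = padic_add p (padic_mult p (x j) (\<eta> j)) (padic_mult p (x j) (\<xi> j))"
    by (rule padic_distrib_left[OF c(1,3,2) assms(2)])
  thus ?case unfolding dot_fold_Cons
    using padic_char_add[OF padic_mult_carrier[OF c(1) padic_add_carrier[OF c(3,2) assms(2)] assms(2)] d(1) assms(2)]
      padic_char_add[OF padic_mult_carrier[OF c(1,3) assms(2)] d(2) assms(2)]
      padic_char_add[OF padic_mult_carrier[OF c(1,2) assms(2)] d(3) assms(2)]
      padic_char_add[OF padic_mult_carrier[OF c(1,3) assms(2)] padic_mult_carrier[OF c(1,2) assms(2)] assms(2)]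
      Cons.IH Cons.prems by (simp add: mult_ac)
qed (simp add: dot_fold_Nil)

lemma padic_char_dot_vadd:
  assumes "x \<in> qpn p n" "\<xi> \<in> qpn p n" "\<eta> \<in> qpn p n" "p > 0"
  shows "padic_char p (padic_dot p n x (vadd p n \<eta> \<xi>)) = padic_char p (padic_dot p n x \<eta>) * padic_char p (padic_dot p n x \<xi>)"
proof -
  have "dot_fold p x (vadd p n \<eta> \<xi>) [0..<n] = dot_fold p x (\<lambda>j. padic_add p (\<eta> j) (\<xi> j)) [0..<n]"
    unfolding dot_fold_def vadd_def by (intro foldr_cong) auto
  thus ?thesis unfolding padic_dot_eq_fold using padic_char_dot_fold_vadd[of "[0..<n]" x p \<xi> \<eta>] assms qpn_carrier by auto
qed

lemma padic_char_dot_fold_single: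
  assumes "\<And>j. j \<in> set js \<Longrightarrow> x j \<in> padic_carrier p" "u \<in> padic_carrier p" "p > 0" "distinct js"
  shows "padic_char p (dot_fold p x (\<lambda>j. if j = j0 then u else padic_zero) js) =
    (if j0 \<in> set js then padic_char p (padic_mult p (x j0) u) else 1)"
  using assms(1,4)
proof (induction js)
  case (Cons j js)
  have d: "dot_fold p x (\<lambda>j. if j = j0 then u else padic_zero) js \<in> padic_carrier p"
    by (rule dot_fold_carrier) (use Cons.prems assms(2,3) in auto)
  have m: "padic_mult p (x j) (if j = j0 then u else padic_zero) \<in> padic_carrier p"
    using padic_mult_carrier Cons.prems assms(2,3) by auto
  show ?case unfolding dot_fold_Cons padic_char_add[OF m d assms(3)] using Cons by auto
qed (simp add: dot_fold_Nil)

lemma padic_char_dot_single: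
  assumes "x \<in> qpn p n" "u \<in> padic_carrier p" "p > 0" "j0 < n"
  shows "padic_char p (padic_dot p n x (\<lambda>j. if j = j0 then u else padic_zero)) = padic_char p (padic_mult p (x j0) u)"
  unfolding padic_dot_eq_fold using padic_char_dot_fold_single[of "[0..<n]" x p u j0] assms qpn_carrier by auto

section \<open>Compactness of the unit ball\<close>

definition digit_prefix :: "nat \<Rightarrow> nat \<Rightarrow> padicvec \<Rightarrow> nat \<Rightarrow> int \<Rightarrow> nat" where
  "digit_prefix n m \<xi> = (\<lambda>j i. if j < n \<and> 0 \<le> i \<and> i < int m then \<xi> j i else 0)"

lemma digit_prefix_digit_prefix: "m \<le> m' \<Longrightarrow> digit_prefix n m (digit_prefix n m' \<xi>) = digit_prefix n m \<xi>"
  unfolding digit_prefix_def by (auto simp: fun_eq_iff)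

lemma finite_range_digit_prefix:
  assumes "\<And>L. \<forall>j i. X L j i < p"
  shows "finite (range (\<lambda>L. digit_prefix n m (X L)))"
proof -
  let ?A = "{w :: nat \<Rightarrow> int \<Rightarrow> nat. (\<forall>j i. w j i < p) \<and> (\<forall>j i. \<not> (j < n \<and> 0 \<le> i \<and> i < int m) \<longrightarrow> w j i = 0)}"
  let ?F = "\<lambda>w. restrict (\<lambda>(j, i). w j (int i)) ({..<n} \<times> {..<m})"
  have "inj_on ?F ?A"
  proof (rule inj_onI)
    fix w w' assume w: "w \<in> ?A" "w' \<in> ?A" "?F w = ?F w'"
    show "w = w'"
    proof (intro ext)
      fix j i
      show "w j i = w' j i"
      proof (cases "j < n \<and> 0 \<le> i \<and> i < int m")
        case True
        hence "(j, nat i) \<in> {..<n} \<times> {..<m}" by auto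
        hence "?F w (j, nat i) = ?F w' (j, nat i)" using w(3) by simp
        moreover have "nat i < m" "int (nat i) = i" using True by auto
        ultimately show ?thesis using True by simp
      qed (use w in auto)
    qed
  qed
  moreover have "?F ` ?A \<subseteq> PiE ({..<n} \<times> {..<m}) (\<lambda>_. {..<p})"
    unfolding image_subset_iff restrict_PiE_iff by auto
  moreover have "finite (PiE ({..<n} \<times> {..<m}) (\<lambda>_. {..<p}))" by (intro finite_PiE) auto
  ultimately have "finite ?A" by (rule inj_on_finite)
  moreover have "X undefined 0 0 < p" using assms by blast
  hence "p > 0" by simp
  hence "range (\<lambda>L. digit_prefix n m (X L)) \<subseteq> ?A" using assms unfolding digit_prefix_def by auto
  ultimately show ?thesis using finite_subset by blast
qed

lemma digit_prefix_extend:
  assumes "\<And>L. \<forall>j i. X L j i < p" "infinite {L. digit_prefix n m (X L) = w}"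
  shows "\<exists>w'. infinite {L. digit_prefix n (Suc m) (X L) = w'} \<and> digit_prefix n m w' = w"
proof (rule ccontr)
  assume "\<not> ?thesis"
  hence fin: "\<And>w'. digit_prefix n m w' = w \<Longrightarrow> finite {L. digit_prefix n (Suc m) (X L) = w'}" by auto
  let ?W = "range (\<lambda>L. digit_prefix n (Suc m) (X L)) \<inter> {w'. digit_prefix n m w' = w}"
  have "{L. digit_prefix n m (X L) = w} \<subseteq> (\<Union>w'\<in>?W. {L. digit_prefix n (Suc m) (X L) = w'})"
    using digit_prefix_digit_prefix[of m "Suc m" n] by auto
  moreover have "finite (\<Union>w'\<in>?W. {L. digit_prefix n (Suc m) (X L) = w'})"
    using finite_range_digit_prefix[where X=X, OF assms(1), of n "Suc m"] fin by (intro finite_UN_I) auto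
  ultimately show False using assms(2) finite_subset by blast
qed

lemma digit_prefix_chain:
  fixes X :: "nat \<Rightarrow> nat \<Rightarrow> int \<Rightarrow> nat"
  assumes "\<And>L. \<forall>j i. X L j i < p"
  obtains W where "\<And>m. infinite {L. digit_prefix n m (X L) = W m}"
    "\<And>m m'. m' \<le> m \<Longrightarrow> digit_prefix n m' (W m) = W m'"
proof -
  define G where "G = (\<lambda>m w. infinite {L. digit_prefix n m (X L) = w})"
  define W where "W = rec_nat (\<lambda>_ _. 0::nat) (\<lambda>m w. SOME w'. G (Suc m) w' \<and> digit_prefix n m w' = w)"
  have W0: "W 0 = (\<lambda>_ _. 0)" unfolding W_def by simp
  have WS: "W (Suc m) = (SOME w'. G (Suc m) w' \<and> digit_prefix n m w' = W m)" for m unfolding W_def by simp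
  have GW: "G m (W m) \<and> (\<forall>m'\<le>m. digit_prefix n m' (W m) = W m')" for m
  proof (induction m)
    case 0
    have "digit_prefix n 0 (X L) = (\<lambda>_ _. 0)" for L by (simp add: digit_prefix_def fun_eq_iff)
    thus ?case unfolding G_def W0 by (auto simp: digit_prefix_def fun_eq_iff W0)
  next
    case (Suc m)
    have "\<exists>w'. G (Suc m) w' \<and> digit_prefix n m w' = W m"
      using digit_prefix_extend[where X=X, OF assms] Suc.IH unfolding G_def by blast
    hence s: "G (Suc m) (W (Suc m)) \<and> digit_prefix n m (W (Suc m)) = W m"
      unfolding WS by (rule someI_ex)
    have "digit_prefix n m' (W (Suc m)) = W m'" if "m' \<le> Suc m" for m'
    proof (cases "m' = Suc m")
      case True
      from s obtain L where "digit_prefix n (Suc m) (X L) = W (Suc m)"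
        unfolding G_def by (metis (mono_tags) empty_Collect_eq finite.emptyI)
      thus ?thesis using True digit_prefix_digit_prefix[of "Suc m" "Suc m" n "X L"] by simp
    next
      case False
      hence "m' \<le> m" using that by auto
      hence "digit_prefix n m' (W (Suc m)) = digit_prefix n m' (digit_prefix n m (W (Suc m)))"
        using digit_prefix_digit_prefix by metis
      thus ?thesis using s Suc.IH \<open>m' \<le> m\<close> by simp
    qed
    thus ?case using s by auto
  qed
  show ?thesis by (rule that) (use GW G_def in auto)
qed

text \<open>Koenig's lemma for digit arrays: this is the sequential compactness of \<open>\<int>\<^sub>p\<^sup>n\<close>.\<close>

lemma digit_prefix_limit:
  fixes X :: "nat \<Rightarrow> nat \<Rightarrow> int \<Rightarrow> nat"
  assumes X: "\<And>L. \<forall>j i. X L j i < p"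
  shows "\<exists>\<xi>. (\<forall>j i. \<xi> j i < p) \<and> (\<forall>j i. \<not> (j < n \<and> 0 \<le> i) \<longrightarrow> \<xi> j i = 0) \<and>
              (\<forall>m. \<exists>L\<ge>m. digit_prefix n m (X L) = digit_prefix n m \<xi>)"
proof -
  obtain W where inf: "\<And>m. infinite {L. digit_prefix n m (X L) = W m}"
    and chain: "\<And>m m'. m' \<le> m \<Longrightarrow> digit_prefix n m' (W m) = W m'"
    by (rule digit_prefix_chain[where X = X and n = n, OF X]) blast
  have Wx: "\<exists>L. digit_prefix n m (X L) = W m" for m
    using inf[of m] by (metis (mono_tags) empty_Collect_eq finite.emptyI)
  define \<xi> where "\<xi> = (\<lambda>j i. if j < n \<and> 0 \<le> i then W (Suc (nat i)) j i else 0)"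
  have pw: "digit_prefix n m \<xi> = W m" for m
  proof (intro ext)
    fix j i
    obtain L where L: "digit_prefix n m (X L) = W m" using Wx by auto
    show "digit_prefix n m \<xi> j i = W m j i"
    proof (cases "j < n \<and> 0 \<le> i \<and> i < int m")
      case True
      hence "Suc (nat i) \<le> m" by auto
      hence "W (Suc (nat i)) j i = digit_prefix n (Suc (nat i)) (W m) j i" using chain by simp
      also have "\<dots> = W m j i" using True unfolding digit_prefix_def by auto
      finally show ?thesis using True unfolding digit_prefix_def \<xi>_def by simp
    next
      case False
      have "W m j i = digit_prefix n m (X L) j i" using L by simp
      thus ?thesis using False unfolding digit_prefix_def by auto
    qed
  qed
  have lt: "\<xi> j i < p" for j i
  proof -
    obtain L where "digit_prefix n (Suc (nat i)) (X L) = W (Suc (nat i))" using Wx by auto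
    hence "W (Suc (nat i)) j i = digit_prefix n (Suc (nat i)) (X L) j i" by simp
    moreover have "X L 0 0 < p" using X by blast
    hence "p > 0" by simp
    ultimately show ?thesis using X[of L] unfolding \<xi>_def digit_prefix_def by (cases "j < n \<and> 0 \<le> i") auto
  qed
  show ?thesis
  proof (intro exI[of _ \<xi>] conjI allI impI)
    fix m
    obtain L where "L \<ge> m" "digit_prefix n m (X L) = W m"
      using inf[of m] unfolding infinite_nat_iff_unbounded_le by auto
    thus "\<exists>L\<ge>m. digit_prefix n m (X L) = digit_prefix n m \<xi>" using pw by auto
  qed (use lt in \<open>auto simp: \<xi>_def\<close>)
qed

lemma padic_int_vec_cluster_point:
  assumes p: "p > 0" and X: "\<And>L. X L \<in> qpn p n" "\<And>L j. j < n \<Longrightarrow> padic_int p (X L j)"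
  shows "\<exists>\<xi>. \<xi> \<in> qpn p n \<and> (\<forall>j<n. padic_int p (\<xi> j)) \<and>
    (\<forall>m. \<exists>L\<ge>m. \<forall>j<n. \<forall>i<int m. X L j i = \<xi> j i)"
proof -
  have digits: "\<forall>j i. X L j i < p" for L
  proof (intro allI)
    fix j i show "X L j i < p"
    proof (cases "j < n")
      case True thus ?thesis using padic_carrier_digit_less[OF qpn_carrier[OF X(1) True]] by blast
    next
      case False thus ?thesis using qpn_out[OF X(1) False] p unfolding padic_zero_def by simp
    qed
  qed
  obtain \<xi> where \<xi>: "\<forall>j i. \<xi> j i < p" "\<forall>j i. \<not> (j < n \<and> 0 \<le> i) \<longrightarrow> \<xi> j i = 0"
    "\<forall>m. \<exists>L\<ge>m. digit_prefix n m (X L) = digit_prefix n m \<xi>"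
    using digit_prefix_limit[where X = X, OF digits] by blast
  have int: "padic_int p (\<xi> j)" for j
  proof -
    have "\<forall>i<0. \<xi> j i = 0" using \<xi>(2) by simp
    thus ?thesis unfolding padic_int_def padic_carrier_def zero_below_def using \<xi>(1) by blast
  qed
  have "\<xi> \<in> qpn p n"
  proof (rule qpnI)
    fix j show "j < n \<Longrightarrow> \<xi> j \<in> padic_carrier p" using int unfolding padic_int_def by blast
    show "\<not> j < n \<Longrightarrow> \<xi> j = padic_zero" using \<xi>(2) unfolding padic_zero_def by auto
  qed
  moreover have "\<exists>L\<ge>m. \<forall>j<n. \<forall>i<int m. X L j i = \<xi> j i" for m
  proof -
    obtain L where L: "L \<ge> m" "digit_prefix n m (X L) = digit_prefix n m \<xi>" using \<xi>(3) by blast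
    have "X L j i = \<xi> j i" if "j < n" "i < int m" for j i
    proof (cases "i < 0")
      case True
      thus ?thesis using int[of j] X(2)[OF that(1), of L] unfolding padic_int_def zero_below_def by simp
    next
      case False
      have "digit_prefix n m (X L) j i = digit_prefix n m \<xi> j i" using L(2) by simp
      thus ?thesis using False that unfolding digit_prefix_def by simp
    qed
    thus ?thesis using L(1) by blast
  qed
  ultimately show ?thesis using int by blast
qed

section \<open>Elliptic polynomials\<close>

locale elliptic_poly =
  fixes p n d :: nat and f :: padic_poly
  assumes p_gt_1: "p > 1" and n_ge_1: "n \<ge> 1" and int_coeffs: "padic_int_coeffs f" and elliptic: "padic_elliptic p n d f"
begin

lemma d_ge_1: "d \<ge> 1" using elliptic unfolding padic_elliptic_def by auto

lemma f_homogeneous: "padic_homogeneous p n d f" using elliptic unfolding padic_elliptic_def by auto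

lemma p_pos: "p > 0" using p_gt_1 by simp

lemma coeff_int: "(c, \<alpha>) \<in> set f \<Longrightarrow> padic_int p c"
  using f_homogeneous int_coeffs unfolding padic_homogeneous_def padic_int_coeffs_def padic_int_def zero_below_def by auto

lemma coeff_carrier: "(c, \<alpha>) \<in> set f \<Longrightarrow> c \<in> padic_carrier p"
  using coeff_int unfolding padic_int_def by auto

lemma f_eval_carrier: "\<xi> \<in> qpn p n \<Longrightarrow> poly_eval p n f \<xi> \<in> padic_carrier p"
  by (rule poly_eval_carrier) (use coeff_carrier qpn_carrier p_gt_1 in auto)

lemma f_eval_eq_zero_iff: "\<xi> \<in> qpn p n \<Longrightarrow> poly_eval p n f \<xi> = padic_zero \<longleftrightarrow> \<xi> = padic_vzero"
  using elliptic unfolding padic_elliptic_def by auto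

lemma f_eval_vec_shift: "\<xi> \<in> qpn p n \<Longrightarrow> poly_eval p n f (vec_shift k \<xi>) = padic_shift (k * int d) (poly_eval p n f \<xi>)"
  unfolding vec_shift_def by (rule poly_eval_shift[OF f_homogeneous _ p_gt_1]) (use qpn_carrier in auto)

lemma f_eval_int: "(\<And>j. j < n \<Longrightarrow> padic_int p (\<xi> j)) \<Longrightarrow> padic_int p (poly_eval p n f \<xi>)"
  by (rule poly_eval_int) (use coeff_int p_gt_1 in auto)

definition unit_sphere :: "padicvec set" where
  "unit_sphere = {\<xi> \<in> qpn p n. (\<forall>j<n. padic_int p (\<xi> j)) \<and> (\<exists>j<n. \<xi> j 0 \<noteq> 0)}"

lemma ex_ord_bound: "\<exists>L::nat. \<forall>\<xi>\<in>unit_sphere. \<not> zero_below (int L) (poly_eval p n f \<xi>)"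
proof (rule ccontr)
  assume "\<not> ?thesis"
  hence "\<forall>L. \<exists>\<xi>. \<xi> \<in> unit_sphere \<and> zero_below (int L) (poly_eval p n f \<xi>)" by auto
  then obtain X where X: "\<And>L. X L \<in> unit_sphere" "\<And>L. zero_below (int L) (poly_eval p n f (X L))"
    by (metis choice)
  have Xq: "\<And>L. X L \<in> qpn p n" and Xint: "\<And>L j. j < n \<Longrightarrow> padic_int p (X L j)"
    using X(1) unfolding unit_sphere_def by blast+
  obtain \<xi> where \<xi>: "\<xi> \<in> qpn p n" and \<xi>int: "\<And>j. j < n \<Longrightarrow> padic_int p (\<xi> j)"
    and agree: "\<And>m. \<exists>L\<ge>m. \<forall>j<n. \<forall>i<int m. X L j i = \<xi> j i"
    using padic_int_vec_cluster_point[where X = X, OF p_pos Xq Xint] by blast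
  have "poly_eval p n f \<xi> i = 0" for i
  proof (cases "i < 0")
    case True
    thus ?thesis using f_eval_int[where \<xi> = \<xi>, OF \<xi>int] unfolding padic_int_def zero_below_def by blast
  next
    case False
    obtain L where L: "L \<ge> Suc (nat i)" "\<forall>j<n. \<forall>i'<int (Suc (nat i)). X L j i' = \<xi> j i'"
      using agree by blast
    have "poly_eval p n f \<xi> i = poly_eval p n f (X L) i"
      by (rule poly_eval_digit_cong[where m = "int (Suc (nat i))" and \<xi> = \<xi> and \<xi>' = "X L",
          OF coeff_int \<xi>int Xint[where L = L] p_gt_1])
        (use L(2) False in auto)
    also have "\<dots> = 0" using X(2)[of L] L(1) False unfolding zero_below_def by simp
    finally show ?thesis .
  qed
  hence "poly_eval p n f \<xi> = padic_zero" unfolding padic_zero_def by (intro ext) simp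
  hence \<xi>0: "\<xi> = padic_vzero" using f_eval_eq_zero_iff[OF \<xi>] by simp
  obtain L where L: "\<forall>j<n. \<forall>i<int 1. X L j i = \<xi> j i" using agree[of 1] by blast
  obtain j where j: "j < n" "X L j 0 \<noteq> 0" using X(1)[of L] unfolding unit_sphere_def by blast
  have "X L j 0 = \<xi> j 0" using L j(1) by simp
  thus False using j(2) \<xi>0 unfolding padic_vzero_def padic_zero_def by simp
qed

definition ord_bound :: nat where "ord_bound = (SOME L. \<forall>\<xi>\<in>unit_sphere. \<not> zero_below (int L) (poly_eval p n f \<xi>))"

lemma not_zero_below_ord_bound: "\<xi> \<in> unit_sphere \<Longrightarrow> \<not> zero_below (int ord_bound) (poly_eval p n f \<xi>)"
  using someI_ex[OF ex_ord_bound] unfolding ord_bound_def by blast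

lemma unit_sphere_decomp:
  assumes "\<xi> \<in> qpn p n" "\<xi> \<noteq> padic_vzero"
  obtains w where "padic_norm p n \<xi> = real p powi (- w)" "vec_shift (- w) \<xi> \<in> unit_sphere" "\<xi> = vec_shift w (vec_shift (- w) \<xi>)"
proof -
  obtain w where w: "padic_norm p n \<xi> = real p powi (- w)" "\<forall>j<n. zero_below w (\<xi> j)" "\<exists>j<n. \<xi> j w \<noteq> 0"
    using padic_norm_leading_digit[OF assms(1) n_ge_1 p_gt_1 assms(2)] by auto
  have "vec_shift (- w) \<xi> \<in> unit_sphere"
    unfolding unit_sphere_def
  proof (intro CollectI conjI allI impI)
    show "vec_shift (- w) \<xi> \<in> qpn p n" by (rule vec_shift_qpn[OF assms(1)])
  next
    fix j assume "j < n"
    thus "padic_int p (vec_shift (- w) \<xi> j)" unfolding padic_int_def vec_shift_def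
      using padic_shift_carrier qpn_carrier[OF assms(1)] zero_below_shift[of w "\<xi> j" "- w"] w(2) by auto
  next
    show "\<exists>j<n. vec_shift (- w) \<xi> j 0 \<noteq> 0" using w(3) unfolding vec_shift_def padic_shift_def by auto
  qed
  moreover have "\<xi> = vec_shift w (vec_shift (- w) \<xi>)" by simp
  ultimately show ?thesis using that w(1) by blast
qed

lemma unit_sphere_qpn: "\<xi> \<in> unit_sphere \<Longrightarrow> \<xi> \<in> qpn p n" unfolding unit_sphere_def by auto

lemma abs_f_le_norm_power:
  assumes "\<xi> \<in> qpn p n"
  shows "padic_abs p (poly_eval p n f \<xi>) \<le> padic_norm p n \<xi> ^ d"
proof (cases "\<xi> = padic_vzero")
  case True thus ?thesis using f_eval_eq_zero_iff[OF assms] by (simp add: padic_norm_nonneg[OF n_ge_1])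
next
  case False
  then obtain w where w: "padic_norm p n \<xi> = real p powi (- w)" "vec_shift (- w) \<xi> \<in> unit_sphere" "\<xi> = vec_shift w (vec_shift (- w) \<xi>)"
    using unit_sphere_decomp[OF assms] by metis
  let ?y = "poly_eval p n f (vec_shift (- w) \<xi>)"
  have fy: "poly_eval p n f \<xi> = padic_shift (w * int d) ?y" using f_eval_vec_shift[OF unit_sphere_qpn[OF w(2)], of w] w(3) by simp
  have yz: "padic_int p ?y" using f_eval_int w(2) unfolding unit_sphere_def by auto
  have "padic_abs p ?y \<le> real p powi (- 0)" using padic_abs_le_iff[of ?y p 0] yz p_gt_1 unfolding padic_int_def by simp
  hence "padic_abs p (poly_eval p n f \<xi>) \<le> real p powi (- (w * int d))"
    unfolding fy padic_abs_shift[OF f_eval_carrier[OF unit_sphere_qpn[OF w(2)]] p_pos] using p_gt_1 by simp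
  also have "\<dots> = padic_norm p n \<xi> ^ d" unfolding w(1) by (simp add: power_int_power')
  finally show ?thesis .
qed

lemma abs_f_ge_norm_power:
  assumes "\<xi> \<in> qpn p n"
  shows "padic_abs p (poly_eval p n f \<xi>) \<ge> real p powi (- int ord_bound) * padic_norm p n \<xi> ^ d"
proof (cases "\<xi> = padic_vzero")
  case True
  have "(0::real) ^ d = 0" using d_ge_1 by simp
  thus ?thesis using f_eval_eq_zero_iff[OF assms] True padic_norm_eq_0_iff[OF assms n_ge_1 p_pos] d_ge_1 by (simp add: power_0_left)
next
  case False
  then obtain w where w: "padic_norm p n \<xi> = real p powi (- w)" "vec_shift (- w) \<xi> \<in> unit_sphere" "\<xi> = vec_shift w (vec_shift (- w) \<xi>)"
    using unit_sphere_decomp[OF assms] by metis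
  let ?y = "poly_eval p n f (vec_shift (- w) \<xi>)"
  have fy: "poly_eval p n f \<xi> = padic_shift (w * int d) ?y" using f_eval_vec_shift[OF unit_sphere_qpn[OF w(2)], of w] w(3) by simp
  have yc: "?y \<in> padic_carrier p" using f_eval_carrier[OF unit_sphere_qpn[OF w(2)]] .
  have "\<not> padic_abs p ?y \<le> real p powi (- int ord_bound)" using padic_abs_le_iff[OF yc p_gt_1] not_zero_below_ord_bound[OF w(2)] by simp
  hence "padic_abs p ?y \<ge> real p powi (- int ord_bound)" by simp
  hence "padic_abs p (poly_eval p n f \<xi>) \<ge> real p powi (- (w * int d)) * real p powi (- int ord_bound)"
    unfolding fy padic_abs_shift[OF yc p_pos] using p_gt_1 by (intro mult_left_mono) auto
  moreover have "real p powi (- (w * int d)) = padic_norm p n \<xi> ^ d"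
    unfolding w(1) by (simp add: power_int_power')
  ultimately show ?thesis by (simp add: mult.commute)
qed

lemma padic_int_add_low_digits:
  assumes "padic_int p a" "padic_int p b" "zero_below m b" "i < m"
  shows "padic_add p b a i = a i"
proof -
  have "padic_add p b a i = padic_add p padic_zero a i"
    by (rule padic_int_add_digit_cong[OF assms(2,1) padic_int_zero[OF p_pos] assms(1) p_pos _ _ assms(4)])
      (use assms(3) in \<open>auto simp: zero_below_def padic_zero_def\<close>)
  thus ?thesis using padic_add_zero_left[of a p] assms(1) p_pos unfolding padic_int_def by simp
qed

lemma padic_abs_eq_if_digits_agree:
  assumes "a \<in> padic_carrier p" "b \<in> padic_carrier p" "\<not> zero_below m a" "\<And>i. i < m \<Longrightarrow> a i = b i"
  shows "padic_abs p a = padic_abs p b"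
proof -
  have a0: "a \<noteq> padic_zero" using assms(3) unfolding zero_below_def padic_zero_def by auto
  obtain v where v: "a v \<noteq> 0" "zero_below v a" using padic_valuation_exists[OF assms(1) a0] by auto
  have "v < m" using v assms(3) unfolding zero_below_def by (meson not_le order.trans order_less_le_trans)
  hence "b v \<noteq> 0" "zero_below v b" using v assms(4) unfolding zero_below_def by auto
  thus ?thesis using padic_abs_eq[OF v] padic_abs_eq[of b v p] by simp
qed

lemma abs_f_vadd_small:
  assumes "\<xi> \<in> qpn p n" "\<xi> \<noteq> padic_vzero" "\<eta> \<in> qpn p n"
    and "padic_norm p n \<xi> = real p powi (- w)"
    and "\<And>j. j < n \<Longrightarrow> zero_below (w + int ord_bound + 1) (\<eta> j)"
  shows "padic_abs p (poly_eval p n f (vadd p n \<eta> \<xi>)) = padic_abs p (poly_eval p n f \<xi>)"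
proof -
  obtain w' where w': "padic_norm p n \<xi> = real p powi (- w')" "vec_shift (- w') \<xi> \<in> unit_sphere" "\<xi> = vec_shift w' (vec_shift (- w') \<xi>)"
    using unit_sphere_decomp[OF assms(1,2)] by metis
  have pp: "real p > 1" using p_gt_1 by simp
  have "real p powi (- w') = real p powi (- w)" using w' assms(4) by simp
  hence "- w' \<le> - w" "- w \<le> - w'" using power_int_le_iff[OF pp] by (metis order.refl)+
  hence "w' = w" by simp
  hence w: "vec_shift (- w) \<xi> \<in> unit_sphere" using w' by simp
  let ?x = "vec_shift (- w) \<xi>" and ?e = "vec_shift (- w) \<eta>"
  have xq: "?x \<in> qpn p n" "?e \<in> qpn p n" using vec_shift_qpn assms by auto
  have zx: "\<And>j. j < n \<Longrightarrow> padic_int p (?x j)" using w unfolding unit_sphere_def by auto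
  have ze: "\<And>j. j < n \<Longrightarrow> padic_int p (?e j)" "\<And>j. j < n \<Longrightarrow> zero_below (int ord_bound + 1) (?e j)"
  proof -
    fix j assume j: "j < n"
    have "zero_below (w + int ord_bound + 1 + - w) (?e j)" unfolding vec_shift_def by (rule zero_below_shift[OF assms(5)[OF j]])
    thus "zero_below (int ord_bound + 1) (?e j)" by simp
    hence "zero_below 0 (?e j)" by (rule zero_below_mono) simp
    moreover have "?e j \<in> padic_carrier p" unfolding vec_shift_def by (rule padic_shift_carrier[OF qpn_carrier[OF assms(3) j]])
    ultimately show "padic_int p (?e j)" unfolding padic_int_def by simp
  qed
  have ex: "vadd p n \<eta> \<xi> = vec_shift w (vadd p n ?e ?x)"
    using vadd_vec_shift[OF xq(2) xq(1) p_pos, of w] by simp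
  have zs: "\<And>j. j < n \<Longrightarrow> padic_int p (vadd p n ?e ?x j)" unfolding vadd_def using padic_int_add ze zx p_pos by auto
  have fc: "poly_eval p n f (vadd p n ?e ?x) i = poly_eval p n f ?x i" if "i < int ord_bound + 1" for i
  proof (rule poly_eval_digit_cong[OF _ zs zx p_gt_1 _ that])
    fix j i assume "j < n" "i < int ord_bound + 1"
    thus "vadd p n ?e ?x j i = ?x j i" unfolding vadd_def using padic_int_add_low_digits[OF zx ze(1) ze(2)] by auto
  qed (use coeff_int in auto)
  have "padic_abs p (poly_eval p n f (vadd p n ?e ?x)) = padic_abs p (poly_eval p n f ?x)"
    by (rule padic_abs_eq_if_digits_agree[OF _ _ not_zero_below_ord_bound[OF w], symmetric])
      (use f_eval_carrier xq vadd_qpn p_pos fc in auto)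
  thus ?thesis
    unfolding ex f_eval_vec_shift[OF vadd_qpn[OF xq(2,1) p_pos]]
    using w'(3) \<open>w' = w\<close> f_eval_vec_shift[OF xq(1), of w]
    by (simp add: padic_abs_shift[OF f_eval_carrier[OF vadd_qpn[OF xq(2,1) p_pos]] p_pos] padic_abs_shift[OF f_eval_carrier[OF xq(1)] p_pos])
qed

end

section \<open>Haar measure of balls\<close>

locale haar_measure =
  fixes p n :: nat and M :: "padicvec measure"
  assumes p_gt_1: "p > 1" and n_ge_1: "n \<ge> 1" and haar: "padic_haar p n M"
begin

lemma p_pos: "p > 0" using p_gt_1 by simp

lemma space_M: "space M = qpn p n" using haar unfolding padic_haar_def by auto

lemma sets_M: "sets M = sigma_sets (qpn p n) {padic_ball p n a k | a k. a \<in> qpn p n}"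
  using haar unfolding padic_haar_def by auto

lemma translation_invariant: "a \<in> qpn p n \<Longrightarrow> A \<in> sets M \<Longrightarrow> vadd p n a ` A \<in> sets M \<and> emeasure M (vadd p n a ` A) = emeasure M A"
  using haar unfolding padic_haar_def by auto

lemma padic_ball_sets: "a \<in> qpn p n \<Longrightarrow> padic_ball p n a k \<in> sets M"
  unfolding sets_M by (rule sigma_sets.Basic) auto

definition ball0 :: "int \<Rightarrow> padicvec set" where
  "ball0 k = {z \<in> qpn p n. \<forall>j<n. zero_below (- k) (z j)}"

lemma ball0_eq_padic_ball: "ball0 k = padic_ball p n padic_vzero k"
proof -
  have "padic_ball p n padic_vzero k = {z \<in> qpn p n. padic_norm p n z \<le> real p powi k}"
  proof (intro set_eqI iffI)
    fix x assume "x \<in> padic_ball p n padic_vzero k"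
    then obtain z where "z \<in> qpn p n" "padic_norm p n z \<le> real p powi k" "x = vadd p n padic_vzero z"
      unfolding padic_ball_def by auto
    thus "x \<in> {z \<in> qpn p n. padic_norm p n z \<le> real p powi k}" using vadd_vzero_left[OF _ p_pos] by simp
  next
    fix x assume "x \<in> {z \<in> qpn p n. padic_norm p n z \<le> real p powi k}"
    thus "x \<in> padic_ball p n padic_vzero k" unfolding padic_ball_def using vadd_vzero_left[OF _ p_pos]
      by (intro CollectI exI[of _ x]) auto
  qed
  also have "\<dots> = ball0 k" unfolding ball0_def using padic_norm_le_iff[OF _ n_ge_1 p_gt_1, of _ "- k"] by auto
  finally show ?thesis ..
qed

lemma ball0_sets[measurable]: "ball0 k \<in> sets M"
  unfolding ball0_eq_padic_ball by (rule padic_ball_sets[OF padic_vzero_qpn[OF p_pos]])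

lemma ball0_subset: "ball0 k \<subseteq> qpn p n" unfolding ball0_def by auto

lemma ball0_iff_norm: "z \<in> qpn p n \<Longrightarrow> z \<in> ball0 k \<longleftrightarrow> padic_norm p n z \<le> real p powi k"
  unfolding ball0_def using padic_norm_le_iff[OF _ n_ge_1 p_gt_1, of z "- k"] by auto

lemma padic_vzero_ball0: "padic_vzero \<in> ball0 k"
  unfolding ball0_def using padic_vzero_qpn[OF p_pos] by (auto simp: padic_vzero_def)

definition digit_vec :: "int \<Rightarrow> (nat \<Rightarrow> nat) \<Rightarrow> padicvec" where
  "digit_vec k w = (\<lambda>j. if j < n then (\<lambda>i. if i = - (k + 1) then w j else 0) else padic_zero)"

lemma digit_vec_qpn: "w \<in> {..<n} \<rightarrow>\<^sub>E {..<p} \<Longrightarrow> digit_vec k w \<in> qpn p n"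
  unfolding digit_vec_def by (rule qpnI) (auto simp: padic_carrier_def p_pos PiE_iff intro!: exI[of _ "- (k+1)"])

lemma vadd_digit_vec_apply:
  assumes w: "w \<in> {..<n} \<rightarrow>\<^sub>E {..<p}" and z: "z \<in> ball0 k" and j: "j < n"
  shows "vadd p n (digit_vec k w) z j = (\<lambda>i. digit_vec k w j i + z j i)"
proof -
  have zq: "z \<in> qpn p n" using z ball0_subset by auto
  have "padic_add p (digit_vec k w j) (z j) = (\<lambda>i. digit_vec k w j i + z j i)"
    by (rule padic_add_disjoint_digits[OF qpn_carrier[OF digit_vec_qpn[OF w] j] qpn_carrier[OF zq j] p_pos])
      (use z j in \<open>auto simp: digit_vec_def ball0_def zero_below_def\<close>)
  thus ?thesis using j unfolding vadd_def by simp
qed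

lemma vadd_digit_vec_ball0:
  assumes w: "w \<in> {..<n} \<rightarrow>\<^sub>E {..<p}"
  shows "vadd p n (digit_vec k w) ` ball0 k = {\<xi> \<in> ball0 (k + 1). \<forall>j<n. \<xi> j (- (k + 1)) = w j}"
proof (intro set_eqI iffI)
  fix \<xi> assume "\<xi> \<in> vadd p n (digit_vec k w) ` ball0 k"
  then obtain z where z: "z \<in> ball0 k" "\<xi> = vadd p n (digit_vec k w) z" by auto
  have "\<xi> \<in> qpn p n" using z vadd_qpn[OF digit_vec_qpn[OF w] _ p_pos] ball0_subset by auto
  moreover have "\<forall>j<n. zero_below (- (k + 1)) (\<xi> j) \<and> \<xi> j (- (k + 1)) = w j"
    using vadd_digit_vec_apply[OF w z(1)] z unfolding ball0_def zero_below_def digit_vec_def by auto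
  ultimately show "\<xi> \<in> {\<xi> \<in> ball0 (k + 1). \<forall>j<n. \<xi> j (- (k + 1)) = w j}" unfolding ball0_def by auto
next
  fix \<xi> assume "\<xi> \<in> {\<xi> \<in> ball0 (k + 1). \<forall>j<n. \<xi> j (- (k + 1)) = w j}"
  hence x: "\<xi> \<in> qpn p n" "\<forall>j<n. zero_below (- (k + 1)) (\<xi> j)" "\<forall>j<n. \<xi> j (- (k + 1)) = w j"
    unfolding ball0_def by auto
  define z where "z = (\<lambda>j. if j < n then (\<xi> j)(- (k + 1) := 0) else padic_zero)"
  have zq: "z \<in> qpn p n"
  proof (rule qpnI)
    fix j assume j: "j < n"
    have c: "\<xi> j \<in> padic_carrier p" using qpn_carrier[OF x(1) j] .
    then obtain N where "\<forall>i<N. \<xi> j i = 0" unfolding padic_carrier_def by auto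
    thus "z j \<in> padic_carrier p" using j padic_carrier_digit_less[OF c] p_pos unfolding z_def padic_carrier_def by auto
  qed (auto simp: z_def)
  have zB: "z \<in> ball0 k" unfolding ball0_def using zq x(2) by (auto simp: z_def zero_below_def)
  have "vadd p n (digit_vec k w) z j = \<xi> j" for j
  proof (cases "j < n")
    case True
    thus ?thesis using vadd_digit_vec_apply[OF w zB True] x(3) by (auto simp: digit_vec_def z_def fun_eq_iff)
  next
    case False thus ?thesis using qpn_out[OF x(1) False] unfolding vadd_def by simp
  qed
  thus "\<xi> \<in> vadd p n (digit_vec k w) ` ball0 k" using zB by (metis image_eqI ext)
qed

lemma emeasure_ball0_succ: "emeasure M (ball0 (k + 1)) = of_nat (p ^ n) * emeasure M (ball0 k)"
proof -
  let ?W = "{..<n} \<rightarrow>\<^sub>E {..<p}"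
  let ?F = "\<lambda>w. vadd p n (digit_vec k w) ` ball0 k"
  have cov: "ball0 (k + 1) = (\<Union>w\<in>?W. ?F w)"
  proof (intro set_eqI iffI)
    fix \<xi> assume x: "\<xi> \<in> ball0 (k + 1)"
    define w where "w = restrict (\<lambda>j. \<xi> j (- (k + 1))) {..<n}"
    have "w \<in> ?W" unfolding w_def using x padic_carrier_digit_less[OF qpn_carrier] unfolding ball0_def by auto
    moreover have "\<xi> \<in> ?F w" unfolding vadd_digit_vec_ball0[OF \<open>w \<in> ?W\<close>] using x unfolding w_def by auto
    ultimately show "\<xi> \<in> (\<Union>w\<in>?W. ?F w)" by blast
  qed (use vadd_digit_vec_ball0 in auto)
  have disj: "disjoint_family_on ?F ?W"
    unfolding disjoint_family_on_def
  proof (intro ballI impI)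
    fix w w' assume w: "w \<in> ?W" "w' \<in> ?W" "w \<noteq> w'"
    then obtain j where j: "j < n" "w j \<noteq> w' j" by (metis PiE_ext lessThan_iff)
    show "?F w \<inter> ?F w' = {}" unfolding vadd_digit_vec_ball0[OF w(1)] vadd_digit_vec_ball0[OF w(2)] using j by auto
  qed
  have "emeasure M (ball0 (k + 1)) = (\<Sum>w\<in>?W. emeasure M (?F w))"
  proof -
    have "finite ?W" by (intro finite_PiE) auto
    thus ?thesis unfolding cov by (intro sum_emeasure[symmetric]) (use translation_invariant[OF digit_vec_qpn ball0_sets] disj in auto)
  qed
  also have "\<dots> = (\<Sum>w\<in>?W. emeasure M (ball0 k))" using translation_invariant[OF digit_vec_qpn ball0_sets] by simp
  also have "\<dots> = of_nat (card ?W) * emeasure M (ball0 k)" by simp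
  also have "card ?W = p ^ n" by (simp add: card_PiE)
  finally show ?thesis .
qed

lemma emeasure_ball0_zero: "emeasure M (ball0 0) = 1"
proof -
  have "ball0 0 = zpn p n" unfolding ball0_def zpn_def zero_below_def by auto
  thus ?thesis using haar unfolding padic_haar_def by simp
qed

lemma emeasure_ball0: "emeasure M (ball0 k) = ennreal (real p powi (int n * k))"
proof (cases "k \<ge> 0")
  case True
  thus ?thesis
  proof (induction k rule: int_ge_induct)
    case base thus ?case using emeasure_ball0_zero by simp
  next
    case (step i)
    have e1: "int n * (i + 1) = int n * i + int n" by (simp add: algebra_simps)
    have "real p powi (int n * i + int n) = real p powi (int n * i) * real p powi (int n)"
      by (rule power_int_add) (use p_pos in simp)
    hence "real p powi (int n * (i + 1)) = real p ^ n * real p powi (int n * i)"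
      unfolding e1 by simp
    thus ?case using emeasure_ball0_succ[of i] step.IH p_pos by (simp add: ennreal_mult' ennreal_of_nat_eq_real_of_nat)
  qed
next
  case False
  hence "k \<le> 0" by simp
  thus ?thesis
  proof (induction k rule: int_le_induct)
    case base thus ?case using emeasure_ball0_zero by simp
  next
    case (step i)
    have e1: "int n * i = int n * (i - 1) + int n" by (simp add: right_diff_distrib)
    have "real p powi (int n * (i - 1) + int n) = real p powi (int n * (i - 1)) * real p powi (int n)"
      by (rule power_int_add) (use p_pos in simp)
    hence e: "real p powi (int n * i) = real p ^ n * real p powi (int n * (i - 1))"
      by (subst e1) simp
    have "of_nat (p ^ n) * emeasure M (ball0 (i - 1)) = of_nat (p ^ n) * ennreal (real p powi (int n * (i - 1)))"
      using emeasure_ball0_succ[of "i - 1"] step.IH e p_pos by (simp add: ennreal_mult' ennreal_of_nat_eq_real_of_nat)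
    moreover have nt: "(of_nat (p ^ n) :: ennreal) \<noteq> top" "(of_nat (p ^ n) :: ennreal) \<noteq> 0"
      using p_pos by (simp_all only: ennreal_of_nat_neq_top of_nat_eq_0_iff power_eq_0_iff) simp_all
    ultimately show ?case by (metis ennreal_mult_cancel_left)
  qed
qed

lemma vadd_vimage_eq:
  assumes a: "a \<in> qpn p n" and A: "A \<in> sets M"
  shows "vadd p n a -` A \<inter> space M = vadd p n (vneg p n a) ` A"
proof (intro set_eqI iffI)
  fix z assume z: "z \<in> vadd p n a -` A \<inter> space M"
  hence "z = vadd p n (vneg p n a) (vadd p n a z)" using vneg_vadd_cancel[OF a _ p_pos] space_M by auto
  thus "z \<in> vadd p n (vneg p n a) ` A" using z by auto
next
  fix z assume "z \<in> vadd p n (vneg p n a) ` A"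
  then obtain y where y: "y \<in> A" "z = vadd p n (vneg p n a) y" by auto
  have yq: "y \<in> qpn p n" using sets.sets_into_space[OF A] y space_M by auto
  have "vadd p n a z = y" using vadd_vneg_cancel[OF a yq p_pos] y by simp
  moreover have "z \<in> space M" using vadd_qpn[OF vneg_qpn[OF a p_pos] yq p_pos] y space_M by simp
  ultimately show "z \<in> vadd p n a -` A \<inter> space M" using y by auto
qed

lemma vadd_measurable:
  assumes a: "a \<in> qpn p n"
  shows "vadd p n a \<in> measurable M M"
proof (rule measurableI)
  fix x assume "x \<in> space M" thus "vadd p n a x \<in> space M" using vadd_qpn a p_pos space_M by auto
next
  fix A assume "A \<in> sets M"
  thus "vadd p n a -` A \<inter> space M \<in> sets M"
    using vadd_vimage_eq[OF a] translation_invariant[OF vneg_qpn[OF a p_pos]] by simp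
qed

lemma distr_vadd:
  assumes a: "a \<in> qpn p n"
  shows "distr M M (vadd p n a) = M"
proof (rule measure_eqI)
  fix A assume "A \<in> sets (distr M M (vadd p n a))"
  hence A: "A \<in> sets M" by simp
  thus "emeasure (distr M M (vadd p n a)) A = emeasure M A"
    using emeasure_distr[OF vadd_measurable[OF a] A] vadd_vimage_eq[OF a A]
      translation_invariant[OF vneg_qpn[OF a p_pos] A] by simp
qed simp

lemma
  fixes g :: "padicvec \<Rightarrow> complex"
  assumes a: "a \<in> qpn p n" and g: "integrable M g"
  shows integrable_vadd: "integrable M (\<lambda>x. g (vadd p n a x))"
    and integral_vadd: "(\<integral>x. g (vadd p n a x) \<partial>M) = integral\<^sup>L M g"
proof -
  have gm: "g \<in> borel_measurable M" using g by auto
  show "integrable M (\<lambda>x. g (vadd p n a x))"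
    using integrable_distr_eq[OF vadd_measurable[OF a] gm] g distr_vadd[OF a] by simp
  show "(\<integral>x. g (vadd p n a x) \<partial>M) = integral\<^sup>L M g"
    using integral_distr[OF vadd_measurable[OF a] gm] distr_vadd[OF a] by simp
qed

end

lemma exp_neg_le_pow:
  assumes "y > 0" "m \<ge> 1"
  shows "exp (- y) \<le> (real m / y) ^ m"
proof -
  have "y / real m < exp (y / real m)" using exp_ge_add_one_self[of "y / real m"] by linarith
  hence "(y / real m) ^ m \<le> exp (y / real m) ^ m"
    using assms by (intro power_mono) auto
  also have "\<dots> = exp y" using exp_of_nat_mult[of m "y / real m"] assms by simp
  finally have le: "(y / real m) ^ m \<le> exp y" .
  have pos: "(y / real m) ^ m > 0" using assms by simp
  have "exp (- y) = inverse (exp y)" by (simp add: exp_minus)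
  also have "\<dots> \<le> inverse ((y / real m) ^ m)" using le pos by (intro le_imp_inverse_le) auto
  also have "\<dots> = (real m / y) ^ m" by (simp add: power_inverse[symmetric])
  finally show ?thesis .
qed

lemma abs_exp_diff_le:
  assumes "0 \<le> a" "a \<le> K" "0 \<le> b" "b \<le> K" "0 \<le> (t::real)"
  shows "\<bar>exp (- t * a) - exp (- t * b)\<bar> \<le> t * K"
proof -
  have "exp (- t * a) \<le> 1" "exp (- t * b) \<le> 1" using assms by (auto intro: mult_nonneg_nonneg)
  moreover have "1 - t * a \<le> exp (- t * a)" "1 - t * b \<le> exp (- t * b)"
    using exp_ge_add_one_self[of "- t * a"] exp_ge_add_one_self[of "- t * b"] by simp_all
  moreover have "t * a \<le> t * K" "t * b \<le> t * K" using assms by (auto intro: mult_left_mono)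
  ultimately show ?thesis by linarith
qed

lemma one_minus_cos_pos:
  assumes "0 < c" "c < p"
  shows "1 - cos (2 * pi * real c / real p) > 0"
proof -
  have "0 < pi * real c / real p" using assms by simp
  moreover have "pi * real c / real p < pi" using assms by (simp add: field_simps)
  ultimately have "sin (pi * real c / real p) > 0" by (rule sin_gt_zero)
  moreover have "cos (2 * (pi * real c / real p)) = 1 - 2 * sin (pi * real c / real p) ^ 2"
    by (rule cos_double_sin)
  ultimately show ?thesis by (simp add: mult.assoc)
qed

lemma cmod_one_minus_cis: "cmod (1 - cis \<theta>) \<ge> 1 - cos \<theta>"
  using abs_Re_le_cmod[of "1 - cis \<theta>"] by simp

lemma power_powr_nonneg: "(x::real) \<ge> 0 \<Longrightarrow> d \<ge> 1 \<Longrightarrow> (x ^ d) powr b = x powr (real d * b)"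
  by (cases "x = 0") (auto simp: power_0_left powr_realpow[symmetric] powr_powr)

lemma exists_scale_index:
  fixes q s \<tau> :: real
  assumes q: "q > 1" and s: "s > 0" and \<tau>: "\<tau> > 0"
  obtains k :: int where "1 \<le> \<tau> * q powr (real_of_int k * s)" "q powr real_of_int k \<le> q * \<tau> powr (- 1 / s)"
proof -
  define k where "k = \<lceil>- ln \<tau> / (s * ln q)\<rceil>"
  have lq: "ln q > 0" using q by simp
  have "- ln \<tau> / (s * ln q) * (s * ln q) \<le> real_of_int k * (s * ln q)"
    unfolding k_def using s lq by (intro mult_right_mono) auto
  hence "- ln \<tau> \<le> real_of_int k * s * ln q" using s lq by (simp add: mult.assoc)
  hence "exp (- ln \<tau>) \<le> exp (real_of_int k * s * ln q)" by simp
  hence "1 / \<tau> \<le> q powr (real_of_int k * s)"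
    using \<tau> q by (simp add: powr_def exp_minus divide_inverse mult_ac)
  hence lower: "1 \<le> \<tau> * q powr (real_of_int k * s)" using \<tau> by (simp add: field_simps)
  have "real_of_int k * ln q < (- ln \<tau> / (s * ln q) + 1) * ln q"
    unfolding k_def using lq by (intro mult_strict_right_mono) linarith+
  also have "\<dots> = ln q + (- 1 / s) * ln \<tau>" using s lq by (simp add: field_simps)
  finally have "exp (real_of_int k * ln q) \<le> exp (ln q) * exp ((- 1 / s) * ln \<tau>)"
    by (simp add: exp_add[symmetric])
  hence upper: "q powr real_of_int k \<le> q * \<tau> powr (- 1 / s)"
    using q \<tau> by (simp add: powr_def mult.commute)
  show ?thesis using that lower upper .
qed

lemma shell_term_bound:
  fixes q s \<tau> :: real and k0 :: int and N n k :: nat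
  assumes q: "q > 1" and \<tau>: "\<tau> > 0" and k0: "1 \<le> \<tau> * q powr (real_of_int k0 * s)"
  shows "(real N / (\<tau> * q powr (real_of_int (k0 + int k + 1) * s))) ^ N * q powr (real n * real_of_int (k0 + int k + 1))
         \<le> real N ^ N * q powr (real n * real_of_int k0) * (q powr (real n - s * real N)) ^ (k + 1)"
proof -
  define y where "y = real k + 1"
  have y: "real_of_int (k0 + int k + 1) = real_of_int k0 + y" unfolding y_def by simp
  have qy: "q powr (y * s) > 0" using q by simp
  have "\<tau> * q powr (real_of_int (k0 + int k + 1) * s) = (\<tau> * q powr (real_of_int k0 * s)) * q powr (y * s)"
    unfolding y by (simp add: distrib_right powr_add)
  also have "\<dots> \<ge> q powr (y * s)" using k0 qy by simp
  finally have ge: "\<tau> * q powr (real_of_int (k0 + int k + 1) * s) \<ge> q powr (y * s)" .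
  have pos: "0 < \<tau> * q powr (real_of_int (k0 + int k + 1) * s)" using ge qy by linarith
  have "real N / (\<tau> * q powr (real_of_int (k0 + int k + 1) * s)) \<le> real N / q powr (y * s)"
    by (rule divide_left_mono[OF ge _ mult_pos_pos[OF pos qy]]) simp
  hence "(real N / (\<tau> * q powr (real_of_int (k0 + int k + 1) * s))) ^ N \<le> (real N / q powr (y * s)) ^ N"
    using pos by (intro power_mono) auto
  also have "(real N / q powr (y * s)) ^ N = real N ^ N / q powr (y * s * real N)"
    using q by (simp add: power_divide powr_realpow[symmetric] powr_powr)
  finally have "(real N / (\<tau> * q powr (real_of_int (k0 + int k + 1) * s))) ^ N * q powr (real n * real_of_int (k0 + int k + 1))
      \<le> real N ^ N / q powr (y * s * real N) * q powr (real n * real_of_int (k0 + int k + 1))"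
    by (intro mult_right_mono) auto
  also have "\<dots> = real N ^ N * q powr (real n * real_of_int k0) * q powr ((real n - s * real N) * y)"
    unfolding y using q
    by (simp add: powr_add[symmetric] powr_diff[symmetric] algebra_simps divide_inverse powr_minus[symmetric])
  also have "q powr ((real n - s * real N) * y) = (q powr (real n - s * real N)) ^ (k + 1)"
    by (subst powr_power) (use q in \<open>auto simp: y_def algebra_simps\<close>)
  finally show ?thesis .
qed

lemma power_int_ball_exponent:
  fixes q \<beta> :: real and v L :: int and d n :: nat
  assumes q: "q > 0"
  shows "((q powi (v + L + 1)) ^ d) powr \<beta> * q powi (int n * (v + L + 1))
         = (q powi (L + 1)) powr (\<beta> * real d + real n) * (q powi (- v)) powr (- (\<beta> * real d + real n))"
proof -
  have powi: "q powi k = q powr real_of_int k" for k using q by (simp add: powr_real_of_int')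
  show ?thesis
    unfolding powi using q by (simp add: powr_power powr_powr powr_add[symmetric] algebra_simps)
qed

lemma suminf_ennreal_geometric:
  fixes c \<rho> :: real
  assumes "c \<ge> 0" "0 \<le> \<rho>" "\<rho> < 1"
  shows "(\<Sum>k. ennreal (c * \<rho> ^ (k + 1))) = ennreal (c * (\<rho> / (1 - \<rho>)))"
proof -
  have "(\<lambda>k. \<rho> ^ (k + 1)) sums (\<rho> / (1 - \<rho>))"
    using sums_mult[OF geometric_sums[of \<rho>], of \<rho>] assms by (simp add: power_Suc divide_inverse)
  hence "(\<lambda>k. c * \<rho> ^ (k + 1)) sums (c * (\<rho> / (1 - \<rho>)))" by (rule sums_mult)
  thus ?thesis using assms by (subst suminf_ennreal2) (auto simp: sums_iff)
qed

lemma nn_integral_indicator_add_suminf: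
  assumes "A \<in> sets M" "\<And>k. B k \<in> sets M"
  shows "(\<integral>\<^sup>+x. indicator A x + (\<Sum>k. ennreal (c k) * indicator (B k) x) \<partial>M)
         = emeasure M A + (\<Sum>k. ennreal (c k) * emeasure M (B k))"
proof -
  have "(\<integral>\<^sup>+x. (\<Sum>k. ennreal (c k) * indicator (B k) x) \<partial>M) = (\<Sum>k. \<integral>\<^sup>+x. ennreal (c k) * indicator (B k) x \<partial>M)"
    by (rule nn_integral_suminf) (use assms in measurable)
  thus ?thesis using assms by (subst nn_integral_add) (auto simp: nn_integral_cmult_indicator)
qed

lemma two_regime_bound:
  fixes Z X t s m C1 C2 :: real
  assumes s: "s > 0" and m: "m \<ge> 0" and t: "t > 0" and X: "X \<ge> 0" and C: "C1 > 0" "C2 > 0"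
    and near: "Z \<le> C1 * t powr (- (m / s))"
    and far: "X > 0 \<Longrightarrow> Z \<le> C2 * t * X powr (- (s + m))"
  shows "Z \<le> (C1 + C2) * 2 powr (s + m) * t * (X + t powr (1 / s)) powr (- (s + m))"
proof -
  define T where "T = t powr (1 / s)"
  define E where "E = s + m"
  have T: "T > 0" and E: "E > 0" unfolding T_def E_def using t s m by auto
  have scale: "(C1 + C2) * 2 powr E * t * (2 * Y) powr (- E) = (C1 + C2) * t * Y powr (- E)"
    if "Y \<ge> 0" for Y
  proof -
    have "2 powr E * (2 * Y) powr (- E) = Y powr (- E)" using that by (simp add: powr_mult powr_minus)
    thus ?thesis by (metis mult.assoc mult.commute)
  qed
  consider "X \<le> T" | "T < X" by linarith
  thus ?thesis
  proof cases
    case 1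
    have "T powr (- E) = t powr (- (m / s) - 1)"
      unfolding T_def E_def using s by (simp add: powr_powr field_simps)
    also have "\<dots> = t powr (- (m / s)) / t" using t by (simp add: powr_diff)
    finally have "T powr (- E) = t powr (- (m / s)) / t" .
    hence "(C1 + C2) * t * T powr (- E) = C1 * t powr (- (m / s)) + C2 * t powr (- (m / s))"
      using t by (simp add: field_simps)
    moreover have "0 \<le> C2 * t powr (- (m / s))" using C by simp
    ultimately have "Z \<le> (C1 + C2) * t * T powr (- E)" using near by linarith
    also have "\<dots> = (C1 + C2) * 2 powr E * t * (2 * T) powr (- E)" by (rule scale[symmetric]) (use T in simp)
    also have "\<dots> \<le> (C1 + C2) * 2 powr E * t * (X + T) powr (- E)"
      using 1 T X E C t by (intro mult_left_mono powr_mono2') auto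
    finally show ?thesis unfolding T_def E_def .
  next
    case 2
    hence "Z \<le> (C1 + C2) * t * X powr (- E)" using far T C t unfolding E_def
      by (smt (verit) mult_right_mono powr_ge_zero zero_le_mult_iff)
    also have "\<dots> = (C1 + C2) * 2 powr E * t * (2 * X) powr (- E)" by (rule scale[symmetric]) (use X in simp)
    also have "\<dots> \<le> (C1 + C2) * 2 powr E * t * (X + T) powr (- E)"
      using 2 T E C t by (intro mult_left_mono powr_mono2') auto
    finally show ?thesis unfolding T_def E_def .
  qed
qed

definition char_gap :: "nat \<Rightarrow> real" where
  "char_gap p = Min ((\<lambda>c. 1 - cos (2 * pi * real c / real p)) ` {1..<p})"

lemma char_gap_pos: "p > 1 \<Longrightarrow> char_gap p > 0"
  unfolding char_gap_def using one_minus_cos_pos by (subst Min_gr_iff) auto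

lemma char_gap_le: "0 < c \<Longrightarrow> c < p \<Longrightarrow> char_gap p \<le> 1 - cos (2 * pi * real c / real p)"
  unfolding char_gap_def by (intro Min_le) auto

lemma padic_frac_shift_valuation:
  assumes "zero_below v y"
  shows "padic_frac p (padic_shift (- v - 1) y) = of_nat (y v) / of_nat p"
proof -
  let ?y = "padic_shift (- v - 1) y"
  have zy: "zero_below (- 1) ?y" using zero_below_shift[OF assms, of "- v - 1"] by simp
  have "padic_trunc p ?y (- 1 + 1) = padic_trunc p ?y (- 1) + of_nat (?y (- 1)) * of_nat p powi (- 1)"
    by (rule padic_trunc_succ[OF zy])
  moreover have "padic_trunc p ?y (- 1) = 0" by (rule padic_trunc_below[OF zy])
  moreover have "?y (- 1) = y v" unfolding padic_shift_def by simp
  ultimately show ?thesis unfolding padic_frac_def by (simp add: power_int_minus divide_inverse)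
qed

lemma padic_mult_shift_one:
  assumes "y \<in> padic_carrier p" "p > 1"
  shows "padic_mult p y (padic_shift k padic_one) = padic_shift k y"
  using padic_shift_mult[OF assms(1) padic_one_carrier[OF assms(2)], of 0 k] padic_mult_one_right[OF assms]
    assms(2) by simp

text \<open>The translate \<open>\<eta>\<close> puts the leading digit of \<open>x\<close> right after the radix point of \<open>x \<cdot> \<eta>\<close>,
  so that \<open>\<Psi>(x \<cdot> \<eta>)\<close> is a non-trivial \<open>p\<close>-th root of unity.\<close>

lemma exists_char_shift:
  assumes p: "p > 1" and n: "n \<ge> 1" and x: "x \<in> qpn p n" "x \<noteq> padic_vzero"
  obtains v \<eta> where "padic_norm p n x = real p powi (- v)" "\<eta> \<in> qpn p n"
    "\<forall>j<n. zero_below (- v - 1) (\<eta> j)"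
    "char_gap p \<le> cmod (1 - padic_char p (padic_dot p n x \<eta>))"
proof -
  have p0: "p > 0" using p by simp
  obtain j0 where j0: "j0 < n" "padic_norm p n x = padic_abs p (x j0)"
    using padic_norm_attained[OF n] by blast
  have xj0: "x j0 \<in> padic_carrier p" by (rule qpn_carrier[OF x(1) j0(1)])
  have "x j0 \<noteq> padic_zero"
    using j0 padic_norm_eq_0_iff[OF x(1) n p0] x(2) by auto
  then obtain v where v: "x j0 v \<noteq> 0" "zero_below v (x j0)"
    using padic_valuation_exists[OF xj0] by blast
  define u where "u = padic_shift (- v - 1) padic_one"
  define \<eta> where "\<eta> = (\<lambda>j. if j = j0 then u else padic_zero)"
  have uc: "u \<in> padic_carrier p" unfolding u_def by (rule padic_shift_carrier[OF padic_one_carrier[OF p]])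
  have \<eta>: "\<eta> \<in> qpn p n" unfolding \<eta>_def by (rule qpnI) (use uc j0 p0 in auto)
  have small: "\<forall>j<n. zero_below (- v - 1) (\<eta> j)"
    unfolding \<eta>_def u_def using zero_below_shift[OF zero_below_one, of "- v - 1"] by auto
  have "padic_char p (padic_dot p n x \<eta>) = padic_char p (padic_shift (- v - 1) (x j0))"
    using padic_char_dot_single[OF x(1) uc p0 j0(1)] padic_mult_shift_one[OF xj0 p]
    unfolding \<eta>_def u_def by simp
  also have "\<dots> = cis (2 * pi * real (x j0 v) / real p)"
    unfolding padic_char_def padic_frac_shift_valuation[OF v(2)] by (simp add: of_rat_divide)
  finally have "char_gap p \<le> cmod (1 - padic_char p (padic_dot p n x \<eta>))"
    using cmod_one_minus_cis char_gap_le padic_carrier_digit_less[OF xj0] v(1)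
    by (metis bot_nat_0.not_eq_extremum order.trans)
  moreover have "padic_norm p n x = real p powi (- v)" using j0(2) padic_abs_eq[OF v] by simp
  ultimately show ?thesis using that \<eta> small by blast
qed

section \<open>The heat kernel\<close>

locale heat_kernel_setting = elliptic_poly p n d f + haar_measure p n M for p n d f M +
  fixes \<beta> :: real
  assumes beta_pos: "\<beta> > 0"
begin

definition decay :: "real \<Rightarrow> padicvec \<Rightarrow> real" where
  "decay t \<xi> = exp (- t * padic_abs p (poly_eval p n f \<xi>) powr \<beta>)"

definition integrand :: "padicvec \<Rightarrow> real \<Rightarrow> padicvec \<Rightarrow> complex" where
  "integrand x t \<xi> = padic_char p (padic_dot p n x \<xi>) * complex_of_real (decay t \<xi>)"

lemma heat_kernel_eq_integral: "heat_kernel p n f \<beta> M x t = integral\<^sup>L M (integrand x t)"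
  unfolding heat_kernel_def integrand_def decay_def ..

lemma norm_integrand: "cmod (integrand x t \<xi>) = decay t \<xi>"
  unfolding integrand_def decay_def by (simp add: norm_mult)

lemma abs_f_powr_le_ball0:
  assumes "\<zeta> \<in> ball0 r"
  shows "padic_abs p (poly_eval p n f \<zeta>) powr \<beta> \<le> ((real p powi r) ^ d) powr \<beta>"
proof -
  have zq: "\<zeta> \<in> qpn p n" using assms ball0_subset by auto
  have "padic_norm p n \<zeta> \<le> real p powi r" using ball0_iff_norm[OF zq] assms by simp
  hence "padic_norm p n \<zeta> ^ d \<le> (real p powi r) ^ d"
    using padic_norm_nonneg[OF n_ge_1] by (intro power_mono) auto
  hence "padic_abs p (poly_eval p n f \<zeta>) \<le> (real p powi r) ^ d" using abs_f_le_norm_power[OF zq] by linarith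
  thus ?thesis using beta_pos padic_abs_nonneg by (intro powr_mono2) auto
qed

subsection \<open>Decay for large \<open>x\<close>\<close>

text \<open>Translating the integration variable by \<open>\<eta>\<close> multiplies \<open>Z(x,t)\<close> by \<open>\<Psi>(x \<cdot> \<eta>)\<close>
  up to the change of the decay factor.\<close>

lemma cmod_heat_kernel_shift_le:
  assumes x: "x \<in> qpn p n" and \<eta>: "\<eta> \<in> qpn p n"
  shows "ennreal (cmod (1 - padic_char p (padic_dot p n x \<eta>)) * cmod (heat_kernel p n f \<beta> M x t))
         \<le> (\<integral>\<^sup>+\<xi>. ennreal \<bar>decay t (vadd p n \<eta> \<xi>) - decay t \<xi>\<bar> \<partial>M)"
proof (cases "integrable M (integrand x t)")
  case False
  thus ?thesis unfolding heat_kernel_eq_integral by (simp add: not_integrable_integral_eq)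
next
  case int: True
  define e where "e = padic_char p (padic_dot p n x \<eta>)"
  define Z where "Z = integral\<^sup>L M (integrand x t)"
  define g where "g = (\<lambda>\<xi>. padic_char p (padic_dot p n x \<xi>) * complex_of_real (decay t (vadd p n \<eta> \<xi>)))"
  have "cnj e * e = 1" using complex_norm_square[of e] unfolding e_def by (simp add: mult.commute)
  hence g_eq: "g \<xi> = cnj e * integrand x t (vadd p n \<eta> \<xi>)" if "\<xi> \<in> space M" for \<xi>
    using padic_char_dot_vadd[OF x _ \<eta> p_pos, of \<xi>] that space_M
    unfolding g_def integrand_def e_def by (simp add: mult.assoc[symmetric])
  have "integrable M (\<lambda>\<xi>. cnj e * integrand x t (vadd p n \<eta> \<xi>))"
    using integrable_vadd[OF \<eta> int] by simp
  moreover have "integrable M g \<longleftrightarrow> integrable M (\<lambda>\<xi>. cnj e * integrand x t (vadd p n \<eta> \<xi>))"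
    by (rule Bochner_Integration.integrable_cong) (auto simp: g_eq)
  ultimately have g_int: "integrable M g" by simp
  have "integral\<^sup>L M g = (\<integral>\<xi>. cnj e * integrand x t (vadd p n \<eta> \<xi>) \<partial>M)"
    by (rule Bochner_Integration.integral_cong) (auto simp: g_eq)
  also have "\<dots> = cnj e * Z" unfolding Z_def using integral_vadd[OF \<eta> int] by simp
  finally have "(\<integral>\<xi>. g \<xi> - integrand x t \<xi> \<partial>M) = (cnj e - 1) * Z"
    using Bochner_Integration.integral_diff[OF g_int int] unfolding Z_def by (simp add: algebra_simps)
  moreover have "cmod (cnj e - 1) = cmod (1 - e)"
    using complex_mod_cnj[of "e - 1"] by (simp add: norm_minus_commute)
  ultimately have "ennreal (cmod (1 - e) * cmod Z) = ennreal (cmod (\<integral>\<xi>. g \<xi> - integrand x t \<xi> \<partial>M))"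
    by (simp add: norm_mult)
  also have "\<dots> \<le> (\<integral>\<^sup>+\<xi>. ennreal (cmod (g \<xi> - integrand x t \<xi>)) \<partial>M)"
    by (rule integral_norm_bound_ennreal) (use g_int int in auto)
  also have "\<dots> = (\<integral>\<^sup>+\<xi>. ennreal \<bar>decay t (vadd p n \<eta> \<xi>) - decay t \<xi>\<bar> \<partial>M)"
  proof -
    have "g \<xi> - integrand x t \<xi>
        = padic_char p (padic_dot p n x \<xi>) * complex_of_real (decay t (vadd p n \<eta> \<xi>) - decay t \<xi>)" for \<xi>
      unfolding g_def integrand_def by (simp add: algebra_simps)
    hence "cmod (g \<xi> - integrand x t \<xi>) = \<bar>decay t (vadd p n \<eta> \<xi>) - decay t \<xi>\<bar>" for \<xi>
      by (simp only: norm_mult norm_padic_char norm_of_real mult_1_left)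
    thus ?thesis by simp
  qed
  finally show ?thesis unfolding e_def Z_def heat_kernel_eq_integral .
qed

text \<open>Outside the ball \<open>\<parallel>\<xi>\<parallel> \<le> p\<^sup>r\<close>, a translation that small does not change \<open>|f(\<xi>)|\<close>.\<close>

lemma decay_vadd_diff_le:
  assumes t: "t > 0" and \<xi>: "\<xi> \<in> qpn p n" and \<eta>: "\<eta> \<in> qpn p n"
    and small: "\<forall>j<n. zero_below (- v - 1) (\<eta> j)"
  defines "r \<equiv> v + int ord_bound + 1"
  shows "\<bar>decay t (vadd p n \<eta> \<xi>) - decay t \<xi>\<bar> \<le> t * ((real p powi r) ^ d) powr \<beta> * indicator (ball0 r) \<xi>"
proof (cases "\<xi> \<in> ball0 r")
  case True
  have "vadd p n \<eta> \<xi> \<in> ball0 r"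
    unfolding ball0_def
  proof (intro CollectI conjI allI impI)
    show "vadd p n \<eta> \<xi> \<in> qpn p n" by (rule vadd_qpn[OF \<eta> \<xi> p_pos])
  next
    fix j assume j: "j < n"
    have "zero_below (- r) (\<eta> j)" using zero_below_mono small j unfolding r_def by fastforce
    moreover have "zero_below (- r) (\<xi> j)" using True j unfolding ball0_def by auto
    ultimately show "zero_below (- r) (vadd p n \<eta> \<xi> j)"
      unfolding vadd_def using j padic_add_zero_below[OF qpn_carrier[OF \<eta> j] qpn_carrier[OF \<xi> j] p_pos] by simp
  qed
  hence "\<bar>decay t (vadd p n \<eta> \<xi>) - decay t \<xi>\<bar> \<le> t * ((real p powi r) ^ d) powr \<beta>"
    unfolding decay_def using t
    by (intro abs_exp_diff_le abs_f_powr_le_ball0 True) auto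
  thus ?thesis using True by simp
next
  case False
  have \<xi>0: "\<xi> \<noteq> padic_vzero" using False padic_vzero_ball0 by auto
  obtain w where w: "padic_norm p n \<xi> = real p powi (- w)"
    using padic_norm_leading_digit[OF \<xi> n_ge_1 p_gt_1 \<xi>0] by blast
  have "\<not> real p powi (- w) \<le> real p powi r" using False ball0_iff_norm[OF \<xi>] w by simp
  hence "w + int ord_bound + 1 \<le> - v - 1" using power_int_le_iff[of "real p"] p_gt_1 unfolding r_def by simp
  hence "\<forall>j<n. zero_below (w + int ord_bound + 1) (\<eta> j)" using small zero_below_mono by blast
  hence "decay t (vadd p n \<eta> \<xi>) = decay t \<xi>"
    unfolding decay_def using abs_f_vadd_small[OF \<xi> \<xi>0 \<eta> w] by simp
  thus ?thesis using t by simp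
qed

lemma heat_kernel_le_far:
  "\<exists>C>0. \<forall>x\<in>qpn p n. x \<noteq> padic_vzero \<longrightarrow> (\<forall>t>0.
     cmod (heat_kernel p n f \<beta> M x t) \<le> C * t * padic_norm p n x powr (- (\<beta> * real d + real n)))"
proof -
  define E where "E = \<beta> * real d + real n"
  define C where "C = (real p powi (int ord_bound + 1)) powr E / char_gap p"
  have gap: "char_gap p > 0" by (rule char_gap_pos[OF p_gt_1])
  have "cmod (heat_kernel p n f \<beta> M x t) \<le> C * t * padic_norm p n x powr (- E)"
    if x: "x \<in> qpn p n" "x \<noteq> padic_vzero" and t: "t > 0" for x t
  proof -
    obtain v \<eta> where v: "padic_norm p n x = real p powi (- v)" and \<eta>: "\<eta> \<in> qpn p n"
      and small: "\<forall>j<n. zero_below (- v - 1) (\<eta> j)"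
      and e: "char_gap p \<le> cmod (1 - padic_char p (padic_dot p n x \<eta>))"
      using exists_char_shift[OF p_gt_1 n_ge_1 x] by blast
    define r where "r = v + int ord_bound + 1"
    define K where "K = ((real p powi r) ^ d) powr \<beta>"
    have "ennreal (char_gap p * cmod (heat_kernel p n f \<beta> M x t))
        \<le> ennreal (cmod (1 - padic_char p (padic_dot p n x \<eta>)) * cmod (heat_kernel p n f \<beta> M x t))"
      using e by (intro ennreal_leI mult_right_mono) auto
    also have "\<dots> \<le> (\<integral>\<^sup>+\<xi>. ennreal \<bar>decay t (vadd p n \<eta> \<xi>) - decay t \<xi>\<bar> \<partial>M)"
      by (rule cmod_heat_kernel_shift_le[OF x(1) \<eta>])
    also have "\<dots> \<le> (\<integral>\<^sup>+\<xi>. ennreal (t * K) * indicator (ball0 r) \<xi> \<partial>M)"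
    proof (rule nn_integral_mono)
      fix \<xi> assume "\<xi> \<in> space M"
      hence "\<bar>decay t (vadd p n \<eta> \<xi>) - decay t \<xi>\<bar> \<le> t * K * indicator (ball0 r) \<xi>"
        unfolding K_def r_def using decay_vadd_diff_le[OF t _ \<eta> small] space_M by auto
      thus "ennreal \<bar>decay t (vadd p n \<eta> \<xi>) - decay t \<xi>\<bar> \<le> ennreal (t * K) * indicator (ball0 r) \<xi>"
        by (cases "\<xi> \<in> ball0 r") (auto simp: indicator_def intro: ennreal_leI)
    qed
    also have "\<dots> = ennreal (t * K * real p powi (int n * r))"
      using t unfolding nn_integral_cmult_indicator[OF ball0_sets] emeasure_ball0 K_def
      by (simp add: ennreal_mult')
    finally have "char_gap p * cmod (heat_kernel p n f \<beta> M x t) \<le> t * K * real p powi (int n * r)"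
      using t by (subst (asm) ennreal_le_iff) (auto simp: K_def)
    also have "t * K * real p powi (int n * r) = t * (char_gap p * (C * padic_norm p n x powr (- E)))"
    proof -
      have "K * real p powi (int n * r) = (real p powi (int ord_bound + 1)) powr E * padic_norm p n x powr (- E)"
        unfolding K_def r_def v E_def by (rule power_int_ball_exponent) (use p_pos in simp)
      thus ?thesis using gap by (simp add: C_def mult.assoc)
    qed
    finally show ?thesis using gap by (simp add: mult_ac)
  qed
  moreover have "C > 0" unfolding C_def using gap p_pos by simp
  ultimately show ?thesis unfolding E_def by blast
qed

subsection \<open>Uniform decay in \<open>t\<close>\<close>

definition decay_const :: real where "decay_const = (real p powi (- int ord_bound)) powr \<beta>"

lemma decay_const_pos: "decay_const > 0" unfolding decay_const_def using p_pos by simp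

lemma decay_le_exp_norm:
  assumes "\<xi> \<in> qpn p n" "t > 0"
  shows "decay t \<xi> \<le> exp (- (t * decay_const) * padic_norm p n \<xi> powr (real d * \<beta>))"
proof -
  have nn: "padic_norm p n \<xi> \<ge> 0" by (rule padic_norm_nonneg[OF n_ge_1])
  have "(real p powi (- int ord_bound) * padic_norm p n \<xi> ^ d) powr \<beta> \<le> padic_abs p (poly_eval p n f \<xi>) powr \<beta>"
    using abs_f_ge_norm_power[OF assms(1)] beta_pos nn p_pos by (intro powr_mono2) auto
  moreover have "(real p powi (- int ord_bound) * padic_norm p n \<xi> ^ d) powr \<beta>
      = decay_const * padic_norm p n \<xi> powr (real d * \<beta>)"
    unfolding decay_const_def powr_mult using power_powr_nonneg[OF nn d_ge_1] by simp
  ultimately show ?thesis unfolding decay_def using assms(2) by (simp add: mult.assoc)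
qed

text \<open>The decay \<open>exp (- y) \<le> (N / y)\<^sup>N\<close> with \<open>\<beta> d N > n\<close> beats the growth \<open>p\<^sup>n\<close> of the shells.\<close>

definition decay_order :: nat where "decay_order = nat \<lceil>real n / (\<beta> * real d)\<rceil> + 1"

definition decay_ratio :: real where "decay_ratio = real p powr (real n - \<beta> * real d * real decay_order)"

definition decay_series_const :: real where
  "decay_series_const = 1 + real decay_order ^ decay_order * (decay_ratio / (1 - decay_ratio))"

lemma beta_d_pos: "\<beta> * real d > 0" using beta_pos d_ge_1 by simp

lemma decay_order_ge_1: "decay_order \<ge> 1"
  unfolding decay_order_def by simp

lemma decay_order_gt: "\<beta> * real d * real decay_order > real n"
proof -
  have "real n / (\<beta> * real d) < real decay_order" unfolding decay_order_def by linarith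
  thus ?thesis using beta_d_pos by (simp add: field_simps)
qed

lemma decay_ratio_pos: "0 < decay_ratio" unfolding decay_ratio_def using p_pos by simp

lemma decay_ratio_less_1: "decay_ratio < 1"
proof -
  have "real p powr (real n - \<beta> * real d * real decay_order) < real p powr 0"
    using decay_order_gt p_gt_1 by (intro powr_less_mono) auto
  thus ?thesis unfolding decay_ratio_def using p_pos by simp
qed

lemma decay_series_const_pos: "decay_series_const > 0"
  unfolding decay_series_const_def using decay_ratio_pos decay_ratio_less_1
  by (simp add: add_pos_nonneg)

lemma decay_le_shell_sum:
  fixes k0 :: int
  assumes t: "t > 0" and \<xi>: "\<xi> \<in> qpn p n"
    and k0: "1 \<le> t * decay_const * real p powr (real_of_int k0 * (\<beta> * real d))"
  shows "ennreal (decay t \<xi>) \<le> indicator (ball0 k0) \<xi>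
    + (\<Sum>k. ennreal ((real decay_order / (t * decay_const * real p powr (real_of_int (k0 + int k + 1) * (\<beta> * real d))))
          ^ decay_order) * indicator (ball0 (k0 + int k + 1)) \<xi>)"
    (is "_ \<le> _ + suminf ?F")
proof (cases "\<xi> \<in> ball0 k0")
  case True
  have "decay t \<xi> \<le> 1" unfolding decay_def using t by simp
  thus ?thesis using True by (simp add: add_increasing2)
next
  case False
  have \<xi>0: "\<xi> \<noteq> padic_vzero" using False padic_vzero_ball0 by auto
  obtain m where m: "padic_norm p n \<xi> = real p powi m"
    using padic_norm_values[OF \<xi> n_ge_1 p_pos] padic_norm_eq_0_iff[OF \<xi> n_ge_1 p_pos] \<xi>0 by auto
  have "\<not> real p powi m \<le> real p powi k0" using False ball0_iff_norm[OF \<xi>] m by simp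
  hence "m > k0" using power_int_le_iff[of "real p"] p_gt_1 by simp
  then obtain k where k: "m = k0 + int k + 1" by (metis add.commute zless_iff_Suc_zadd of_nat_Suc add.assoc)
  have "padic_norm p n \<xi> powr (real d * \<beta>) = real p powr (real_of_int m * (\<beta> * real d))"
    unfolding m using p_pos by (simp add: powr_real_of_int'[symmetric] powr_powr mult_ac)
  hence "decay t \<xi> \<le> exp (- (t * decay_const * real p powr (real_of_int m * (\<beta> * real d))))"
    using decay_le_exp_norm[OF \<xi> t] by simp
  also have "\<dots> \<le> (real decay_order / (t * decay_const * real p powr (real_of_int m * (\<beta> * real d)))) ^ decay_order"
    using t decay_const_pos decay_order_ge_1 p_pos by (intro exp_neg_le_pow) auto
  finally have "ennreal (decay t \<xi>) \<le> ?F k"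
    using ball0_iff_norm[OF \<xi>] m unfolding k by (simp add: ennreal_leI)
  also have "\<dots> \<le> suminf ?F"
  proof -
    have "F k \<le> suminf F" for F :: "nat \<Rightarrow> ennreal" using sum_le_suminf[OF summableI, of "{k}" F] by simp
    thus ?thesis .
  qed
  finally show ?thesis by (simp add: add_increasing)
qed

lemma nn_integral_decay_le_scale:
  fixes k0 :: int
  assumes t: "t > 0" and k0: "1 \<le> t * decay_const * real p powr (real_of_int k0 * (\<beta> * real d))"
  shows "(\<integral>\<^sup>+\<xi>. ennreal (decay t \<xi>) \<partial>M) \<le> ennreal (decay_series_const * real p powr (real n * real_of_int k0))"
proof -
  let ?q = "real p" and ?N = "decay_order" and ?\<rho> = "decay_ratio"
  define \<tau> where "\<tau> = t * decay_const"
  have \<tau>: "\<tau> > 0" unfolding \<tau>_def using t decay_const_pos by simp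
  define a where "a k = (real ?N / (\<tau> * ?q powr (real_of_int (k0 + int k + 1) * (\<beta> * real d)))) ^ ?N" for k
  define c where "c = real ?N ^ ?N * ?q powr (real n * real_of_int k0)"
  have a_nonneg: "a k \<ge> 0" for k unfolding a_def using \<tau> by simp
  have "(\<integral>\<^sup>+\<xi>. ennreal (decay t \<xi>) \<partial>M)
      \<le> (\<integral>\<^sup>+\<xi>. indicator (ball0 k0) \<xi> + (\<Sum>k. ennreal (a k) * indicator (ball0 (k0 + int k + 1)) \<xi>) \<partial>M)"
    using decay_le_shell_sum[OF t _ k0] space_M unfolding a_def \<tau>_def by (intro nn_integral_mono) auto
  also have "\<dots> = emeasure M (ball0 k0) + (\<Sum>k. ennreal (a k) * emeasure M (ball0 (k0 + int k + 1)))"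
    by (rule nn_integral_indicator_add_suminf) auto
  also have "\<dots> \<le> ennreal (?q powr (real n * real_of_int k0)) + (\<Sum>k. ennreal (c * ?\<rho> ^ (k + 1)))"
  proof (rule add_mono)
    show "emeasure M (ball0 k0) \<le> ennreal (?q powr (real n * real_of_int k0))"
      unfolding emeasure_ball0 using p_pos by (simp add: powr_real_of_int'[symmetric])
    have "ennreal (a k) * emeasure M (ball0 (k0 + int k + 1)) \<le> ennreal (c * ?\<rho> ^ (k + 1))" for k
    proof -
      have "ennreal (a k) * emeasure M (ball0 (k0 + int k + 1))
          = ennreal (a k * ?q powr (real n * real_of_int (k0 + int k + 1)))"
        unfolding emeasure_ball0 using p_pos a_nonneg[of k] by (simp add: ennreal_mult' powr_real_of_int'[symmetric])
      also have "\<dots> \<le> ennreal (c * ?\<rho> ^ (k + 1))"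
        unfolding a_def c_def decay_ratio_def
        by (intro ennreal_leI shell_term_bound) (use p_gt_1 \<tau> k0 \<tau>_def in auto)
      finally show ?thesis .
    qed
    thus "(\<Sum>k. ennreal (a k) * emeasure M (ball0 (k0 + int k + 1))) \<le> (\<Sum>k. ennreal (c * ?\<rho> ^ (k + 1)))"
      by (intro suminf_le) auto
  qed
  also have "(\<Sum>k. ennreal (c * ?\<rho> ^ (k + 1))) = ennreal (c * (?\<rho> / (1 - ?\<rho>)))"
    unfolding c_def using decay_ratio_pos decay_ratio_less_1 by (intro suminf_ennreal_geometric) auto
  also have "ennreal (?q powr (real n * real_of_int k0)) + \<dots>
      = ennreal (decay_series_const * ?q powr (real n * real_of_int k0))"
    unfolding decay_series_const_def c_def using decay_ratio_pos decay_ratio_less_1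
    by (simp add: ennreal_plus[symmetric] algebra_simps del: ennreal_plus)
  finally show ?thesis .
qed

lemma heat_kernel_le_uniform:
  "\<exists>C>0. \<forall>x\<in>qpn p n. \<forall>t>0. cmod (heat_kernel p n f \<beta> M x t) \<le> C * t powr (- (real n / (\<beta> * real d)))"
proof -
  let ?q = "real p" and ?s = "\<beta> * real d"
  define C where "C = decay_series_const * ?q ^ n * decay_const powr (- (real n / ?s))"
  have "cmod (heat_kernel p n f \<beta> M x t) \<le> C * t powr (- (real n / ?s))" if t: "t > 0" for x t
  proof -
    define \<tau> where "\<tau> = t * decay_const"
    have \<tau>: "\<tau> > 0" unfolding \<tau>_def using t decay_const_pos by simp
    obtain k0 where k0: "1 \<le> \<tau> * ?q powr (real_of_int k0 * ?s)" "?q powr real_of_int k0 \<le> ?q * \<tau> powr (- 1 / ?s)"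
      by (rule exists_scale_index[OF _ beta_d_pos \<tau>]) (use p_gt_1 in auto)
    have "?q powr (real n * real_of_int k0) = (?q powr real_of_int k0) ^ n"
      using p_pos by (simp add: powr_power mult.commute)
    also have "\<dots> \<le> (?q * \<tau> powr (- 1 / ?s)) ^ n" using k0(2) by (intro power_mono) auto
    also have "\<dots> = ?q ^ n * decay_const powr (- (real n / ?s)) * t powr (- (real n / ?s))"
      unfolding \<tau>_def using t decay_const_pos
      by (simp add: power_mult_distrib powr_power powr_powr powr_mult mult_ac)
    finally have scale: "decay_series_const * ?q powr (real n * real_of_int k0) \<le> C * t powr (- (real n / ?s))"
      unfolding C_def using decay_series_const_pos by (simp add: mult_ac)
    have "ennreal (cmod (heat_kernel p n f \<beta> M x t)) \<le> (\<integral>\<^sup>+\<xi>. ennreal (decay t \<xi>) \<partial>M)"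
    proof (cases "integrable M (integrand x t)")
      case True
      show ?thesis unfolding heat_kernel_eq_integral
        using integral_norm_bound_ennreal[OF True] by (simp add: norm_integrand)
    qed (simp add: heat_kernel_eq_integral not_integrable_integral_eq)
    also have "\<dots> \<le> ennreal (decay_series_const * ?q powr (real n * real_of_int k0))"
      by (rule nn_integral_decay_le_scale[OF t]) (use k0(1) \<tau>_def in simp)
    finally have "cmod (heat_kernel p n f \<beta> M x t) \<le> decay_series_const * ?q powr (real n * real_of_int k0)"
      using decay_series_const_pos by (subst (asm) ennreal_le_iff) auto
    with scale show ?thesis by linarith
  qed
  moreover have "C > 0" unfolding C_def using decay_series_const_pos decay_const_pos p_pos by simp
  ultimately show ?thesis by blast
qed

end

theorem theorem1:
  fixes p n d :: nat and \<beta> :: real and f :: padic_poly and M :: "padicvec measure"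
  assumes "prime p" and "n \<ge> 1" and "\<beta> > 0"
    and "padic_int_coeffs f" and "padic_elliptic p n d f"
    and "padic_haar p n M"
  shows "\<exists>A>0. \<forall>x\<in>qpn p n. \<forall>t>0.
           cmod (heat_kernel p n f \<beta> M x t)
             \<le> A * t * (padic_norm p n x + t powr (1 / (\<beta> * real d))) powr (- (real d * \<beta>) - real n)"
proof -
  interpret heat_kernel_setting p n d f M \<beta>
    by unfold_locales (use assms prime_gt_1_nat in auto)
  obtain C1 where C1: "C1 > 0"
    "\<forall>x\<in>qpn p n. \<forall>t>0. cmod (heat_kernel p n f \<beta> M x t) \<le> C1 * t powr (- (real n / (\<beta> * real d)))"
    using heat_kernel_le_uniform by blast
  obtain C2 where C2: "C2 > 0" "\<forall>x\<in>qpn p n. x \<noteq> padic_vzero \<longrightarrow> (\<forall>t>0.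
      cmod (heat_kernel p n f \<beta> M x t) \<le> C2 * t * padic_norm p n x powr (- (\<beta> * real d + real n)))"
    using heat_kernel_le_far by blast
  have bound: "cmod (heat_kernel p n f \<beta> M x t)
      \<le> (C1 + C2) * 2 powr (\<beta> * real d + real n) * t
        * (padic_norm p n x + t powr (1 / (\<beta> * real d))) powr (- (\<beta> * real d + real n))"
    if x: "x \<in> qpn p n" and t: "t > 0" for x t
  proof (rule two_regime_bound[OF beta_d_pos _ t padic_norm_nonneg[OF n_ge_1] C1(1) C2(1)])
    show "padic_norm p n x > 0 \<Longrightarrow> cmod (heat_kernel p n f \<beta> M x t)
        \<le> C2 * t * padic_norm p n x powr (- (\<beta> * real d + real n))"
      using C2(2) x t padic_norm_eq_0_iff[OF x n_ge_1 p_pos] by auto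
  qed (use C1(2) x t in auto)
  have exponent: "- (real d * \<beta>) - real n = - (\<beta> * real d + real n)" by simp
  show ?thesis
    unfolding exponent using bound C1(1) C2(1)
    by (intro exI[of _ "(C1 + C2) * 2 powr (\<beta> * real d + real n)"]) auto
qed

end
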